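(* Fix $j\in\{1,\ldots,d\}$ and an American option $\xi$. For each $t$ and $\mu\in\Omega_t$ let $U^{\mathrm{ad}\mu}_t,V^{\mathrm{ad}\mu}_t,W^{\mathrm{ad}\mu}_t,Z^{\mathrm{ad}\mu}_t$ be the support functions of $-\mathcal{U}^{\mathrm{ad}\mu}_t,-\mathcal{V}^{\mathrm{ad}\mu}_t,-\mathcal{W}^{\mathrm{ad}\mu}_t,-\mathcal{Z}^{\mathrm{ad}\mu}_t$. Then: (1) For each $t=0,\ldots,T$ and $\mu\in\Omega_t$, the cone $(\mathcal{Q}^\mu_t)^\ast$ is compactly $j$-generated. (2) For all $t=0,\ldots,T$, $\mu\in\Omega_t$ and $y\in\mathbb{R}^d$: $U^{\mathrm{ad}\mu}_t(y)=-y\cdot\xi_t(\mu)$ if $y\in(\mathcal{Q}^\mu_t)^\ast$ and $=\infty$ otherwise; $V^{\mathrm{ad}\mu}_t(y)=W^{\mathrm{ad}\mu}_t(y)$ if $y\in(\mathcal{Q}^\mu_t)^\ast$ and $=\infty$ otherwise. (3) $\mathrm{dom}\,Z^{\mathrm{ad}\mu}_t=(\mathcal{Q}^\mu_t)^\ast$ for all $t=0,\ldots,T$ and $\mu\in\Omega_t$. For all $t=0,\ldots,T-1$ and $\mu\in\Omega_t$, $Z^{\mathrm{ad}\mu}_t=\mathrm{conv}\{U^{\mathrm{ad}\mu}_t,V^{\mathrm{ad}\mu}_t\}$, and for each $y\in\sigma_j((\mathcal{Q}^\mu_t)^\ast)$ there exist $\lambda\in[0,1]$, $x\in\sigma_j(\mathrm{dom}\,V^{\mathrm{ad}\mu}_t)$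 and $s\in\sigma_j((\mathcal{Q}^\mu_t)^\ast)$ with $Z^{\mathrm{ad}\mu}_t(y)=\lambda U^{\mathrm{ad}\mu}_t(s)+(1-\lambda)V^{\mathrm{ad}\mu}_t(x)$ and $y=\lambda s+(1-\lambda)x$. (4) For all $t=0,\ldots,T-1$ and $\mu\in\Omega_t$, $W^{\mathrm{ad}\mu}_t=\mathrm{conv}\{Z^{\mathrm{ad}\nu}_{t+1}:\nu\in\mathrm{succ}\,\mu\}$, and for each $x\in\sigma_j(\mathrm{dom}\,W^{\mathrm{ad}\mu}_t)$ there exist $q^\nu\in[0,1]$ and $y^\nu\in\sigma_j((\mathcal{Q}^\nu_{t+1})^\ast)$ for $\nu\in\mathrm{succ}\,\mu$ with $W^{\mathrm{ad}\mu}_t(x)=\sum_{\nu}q^\nu Z^{\mathrm{ad}\nu}_{t+1}(y^\nu)$, $x=\sum_\nu q^\nu y^\nu$ and $\sum_\nu q^\nu=1$.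
   Context: Finite filtered probability space $(\Omega,\mathcal{F},\mathbb{P};(\mathcal{F}_t)_{t=0}^T)$, $\mathcal{F}_0$ trivial, $\mathcal{F}_T=2^\Omega$, $\mathbb{P}(\{\omega\})>0$. $\Omega_t$: atoms (nodes) of $\mathcal{F}_t$; $\mathrm{succ}\,\mu=\{\nu\in\Omega_{t+1}:\nu\subseteq\mu\}$. $\mathcal{L}_t$: $\mathcal{F}_t$-measurable $\mathbb{R}^d$-valued random variables. $d$ assets, $\mathcal{F}_t$-measurable exchange rates $\pi^{jk}_t>0$, $\pi^{jj}_t=1$. $\mathcal{K}^\mu_t$: convex cone generated by $e^1,\ldots,e^d$ and $\pi^{jk}_t(\mu)e^j-e^k$; $\mathcal{K}_t=\{x\in\mathcal{L}_t:x(\mu)\in\mathcal{K}^\mu_t\ \forall\mu\}$. Deferred solvency cone $\mathcal{Q}_t$: $z\in\mathcal{L}_t$ for which there exist $y_{t+1},\ldots,y_{T+1}$, $y_s\in\mathcal{L}_{s-1}$, $y_{T+1}=0$, with $z-y_{t+1}\in\mathcal{K}_t$, $y_s-y_{s+1}\in\mathcal{K}_s$ ($s>t$); $\mathcal{Q}^\mu_t=\{z(\mu):z\in\mathcal{Q}_t\}$. American option: adapted $\mathbb{R}^d$-valued $\xi=(\xi_t)_{t=0}^T$. Construction (nodewise): $\mathcal{U}^{\mathrm{ad}\mu}_t=\xi_t(\mu)+\mathcal{Q}^\mu_t$; at $T$: $\mathcal{Z}^{\mathrm{ad}\mu}_T=\mathcal{V}^{\mathrm{ad}\mu}_T=\mathcal{W}^{\mathrm{ad}\mu}_T=\mathcal{U}^{\mathrm{ad}\mu}_T$;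 for $t<T$: $\mathcal{W}^{\mathrm{ad}\mu}_t=\bigcap_{\nu\in\mathrm{succ}\,\mu}\mathcal{Z}^{\mathrm{ad}\nu}_{t+1}$, $\mathcal{V}^{\mathrm{ad}\mu}_t=\mathcal{W}^{\mathrm{ad}\mu}_t+\mathcal{Q}^\mu_t$, $\mathcal{Z}^{\mathrm{ad}\mu}_t=\mathcal{U}^{\mathrm{ad}\mu}_t\cap\mathcal{V}^{\mathrm{ad}\mu}_t$. Convex analysis notation: for a cone $A$, $A^\ast=\{y:y\cdot x\ge0\ \forall x\in A\}$. The support function of a convex set $A$ is $\delta^\ast_A(x)=\sup\{x\cdot y:y\in A\}$. The effective domain of $f:\mathbb{R}^d\to\mathbb{R}\cup\{\infty\}$ is $\mathrm{dom}\,f=\{y:f(y)<\infty\}$. The convex hull of convex functions $f_1,\ldots,f_n$ is $f(x)=\inf\{\sum_i\lambda_if_i(x_i):\lambda_i\in[0,1],\sum_i\lambda_i=1,\sum_i\lambda_ix_i=x\}$. $\sigma_j(A)=\{x\in A:x^j=1\}$; a cone $A$ is compactly $j$-generated if $\sigma_j(A)$ is compact, non-empty and generates $A$ (i.e. $A=\{\lambda x:\lambda\ge0,x\in\sigma_j(A)\}$). Standing assumption: no arbitrage (no predictable $y$ with $y_0=0$, $y_{T+1}=0$, $y_t-y_{t+1}\in\mathcal{K}_t$ for $t<T$ and $y_T-x\in\mathcal{K}_T$ for a nonzero componentwise non-negative $x\in\mathcal{L}_T$). *)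

theory Defs
  imports "HOL-Analysis.Analysis" "HOL-Library.Disjoint_Sets"
begin

text \<open>Finite filtration given by its atoms: F t is the set of atoms (nodes) of the
  sigma-algebra at time t, for t = 0..T, on the finite sample space Om.\<close>

definition filtration :: "'w set \<Rightarrow> (nat \<Rightarrow> 'w set set) \<Rightarrow> nat \<Rightarrow> bool" where
  "filtration Om F T \<longleftrightarrow> finite Om
     \<and> (\<forall>t\<le>T. partition_on Om (F t))
     \<and> F 0 = {Om}
     \<and> F T = (\<lambda>w. {w}) ` Om
     \<and> (\<forall>t<T. \<forall>\<nu>\<in>F (Suc t). \<exists>\<mu>\<in>F t. \<nu> \<subseteq> \<mu>)"

definition succ :: "(nat \<Rightarrow> 'w set set) \<Rightarrow> nat \<Rightarrow> 'w set \<Rightarrow> 'w set set" where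
  "succ F t \<mu> = {\<nu> \<in> F (Suc t). \<nu> \<subseteq> \<mu>}"

definition adapted :: "(nat \<Rightarrow> 'w set set) \<Rightarrow> nat \<Rightarrow> ('w \<Rightarrow> 'a) \<Rightarrow> bool" where
  "adapted F t X \<longleftrightarrow> (\<forall>\<mu>\<in>F t. \<forall>w\<in>\<mu>. \<forall>w'\<in>\<mu>. X w = X w')"

definition atnode :: "('w \<Rightarrow> 'a) \<Rightarrow> 'w set \<Rightarrow> 'a" where
  "atnode X \<mu> = X (SOME w. w \<in> \<mu>)"

definition exchange_rates :: "'w set \<Rightarrow> (nat \<Rightarrow> 'w set set) \<Rightarrow> nat
      \<Rightarrow> (nat \<Rightarrow> 'w \<Rightarrow> 'd::finite \<Rightarrow> 'd \<Rightarrow> real) \<Rightarrow> bool" where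
  "exchange_rates Om F T rate \<longleftrightarrow> (\<forall>t\<le>T. adapted F t (rate t)
      \<and> (\<forall>w\<in>Om. \<forall>j k. rate t w j k > 0) \<and> (\<forall>w\<in>Om. \<forall>k. rate t w k k = 1))"

definition Kcone :: "(nat \<Rightarrow> 'w \<Rightarrow> 'd::finite \<Rightarrow> 'd \<Rightarrow> real) \<Rightarrow> nat \<Rightarrow> 'w \<Rightarrow> (real^'d) set" where
  "Kcone rate t w = convex_cone hull
     (range (\<lambda>k. axis k 1) \<union> {rate t w j k *\<^sub>R axis j 1 - axis k 1 | j k. True})"

definition Qset :: "'w set \<Rightarrow> (nat \<Rightarrow> 'w set set) \<Rightarrow> nat
      \<Rightarrow> (nat \<Rightarrow> 'w \<Rightarrow> 'd::finite \<Rightarrow> 'd \<Rightarrow> real) \<Rightarrow> nat \<Rightarrow> ('w \<Rightarrow> real^'d) set" where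
  "Qset Om F T rate t = {z. adapted F t z \<and>
     (\<exists>y :: nat \<Rightarrow> 'w \<Rightarrow> real^'d.
        (\<forall>s\<in>{t+1..T+1}. adapted F (s - 1) (y s))
      \<and> (\<forall>w\<in>Om. y (T+1) w = 0)
      \<and> (\<forall>w\<in>Om. z w - y (t+1) w \<in> Kcone rate t w)
      \<and> (\<forall>s\<in>{t+1..T}. \<forall>w\<in>Om. y s w - y (s+1) w \<in> Kcone rate s w))}"

definition Qnode :: "'w set \<Rightarrow> (nat \<Rightarrow> 'w set set) \<Rightarrow> nat
      \<Rightarrow> (nat \<Rightarrow> 'w \<Rightarrow> 'd::finite \<Rightarrow> 'd \<Rightarrow> real) \<Rightarrow> nat \<Rightarrow> 'w set \<Rightarrow> (real^'d) set" where
  "Qnode Om F T rate t \<mu> = {v. \<exists>z\<in>Qset Om F T rate t. \<forall>w\<in>\<mu>. z w = v}"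

definition no_arbitrage :: "'w set \<Rightarrow> (nat \<Rightarrow> 'w set set) \<Rightarrow> nat
      \<Rightarrow> (nat \<Rightarrow> 'w \<Rightarrow> 'd::finite \<Rightarrow> 'd \<Rightarrow> real) \<Rightarrow> bool" where
  "no_arbitrage Om F T rate \<longleftrightarrow> \<not> (\<exists>(y :: nat \<Rightarrow> 'w \<Rightarrow> real^'d) (x :: 'w \<Rightarrow> real^'d).
        (\<forall>w\<in>Om. y 0 w = 0)
      \<and> (\<forall>s\<in>{1..T+1}. adapted F (s - 1) (y s))
      \<and> (\<forall>w\<in>Om. y (T+1) w = 0)
      \<and> (\<forall>t<T. \<forall>w\<in>Om. y t w - y (t+1) w \<in> Kcone rate t w)
      \<and> (\<forall>w\<in>Om. y T w - x w \<in> Kcone rate T w)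
      \<and> adapted F T x
      \<and> (\<forall>w\<in>Om. \<forall>k. 0 \<le> x w $ k)
      \<and> (\<exists>w\<in>Om. x w \<noteq> 0))"

definition american_option :: "(nat \<Rightarrow> 'w set set) \<Rightarrow> nat \<Rightarrow> (nat \<Rightarrow> 'w \<Rightarrow> real^'d) \<Rightarrow> bool" where
  "american_option F T xi \<longleftrightarrow> (\<forall>t\<le>T. adapted F t (xi t))"

definition Uad :: "'w set \<Rightarrow> (nat \<Rightarrow> 'w set set) \<Rightarrow> nat
      \<Rightarrow> (nat \<Rightarrow> 'w \<Rightarrow> 'd::finite \<Rightarrow> 'd \<Rightarrow> real) \<Rightarrow> (nat \<Rightarrow> 'w \<Rightarrow> real^'d)
      \<Rightarrow> nat \<Rightarrow> 'w set \<Rightarrow> (real^'d) set" where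
  "Uad Om F T rate xi t \<mu> = (\<lambda>q. atnode (xi t) \<mu> + q) ` Qnode Om F T rate t \<mu>"

text \<open>Zrec n mu = Z^{ad mu}_{T-n}, by backward recursion.\<close>
primrec Zrec :: "'w set \<Rightarrow> (nat \<Rightarrow> 'w set set) \<Rightarrow> nat
      \<Rightarrow> (nat \<Rightarrow> 'w \<Rightarrow> 'd::finite \<Rightarrow> 'd \<Rightarrow> real) \<Rightarrow> (nat \<Rightarrow> 'w \<Rightarrow> real^'d)
      \<Rightarrow> nat \<Rightarrow> 'w set \<Rightarrow> (real^'d) set" where
  "Zrec Om F T rate xi 0 \<mu> = Uad Om F T rate xi T \<mu>"
| "Zrec Om F T rate xi (Suc n) \<mu> =
     Uad Om F T rate xi (T - Suc n) \<mu> \<inter>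
     {w + q | w q. w \<in> (\<Inter>\<nu>\<in>succ F (T - Suc n) \<mu>. Zrec Om F T rate xi n \<nu>)
                 \<and> q \<in> Qnode Om F T rate (T - Suc n) \<mu>}"

definition Zad where
  "Zad Om F T rate xi t \<mu> = Zrec Om F T rate xi (T - t) \<mu>"

definition Wad where
  "Wad Om F T rate xi t \<mu> = (if t < T then (\<Inter>\<nu>\<in>succ F t \<mu>. Zad Om F T rate xi (Suc t) \<nu>)
                            else Uad Om F T rate xi t \<mu>)"

definition Vad where
  "Vad Om F T rate xi t \<mu> = (if t < T then {w + q | w q. w \<in> Wad Om F T rate xi t \<mu> \<and> q \<in> Qnode Om F T rate t \<mu>}
                            else Uad Om F T rate xi t \<mu>)"

definition dual_cone :: "(real^'d) set \<Rightarrow> (real^'d) set" where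
  "dual_cone A = {y. \<forall>x\<in>A. 0 \<le> y \<bullet> x}"

definition support_fun :: "(real^'d) set \<Rightarrow> real^'d \<Rightarrow> ereal" where
  "support_fun A x = (SUP y\<in>A. ereal (x \<bullet> y))"

definition edom :: "(real^'d \<Rightarrow> ereal) \<Rightarrow> (real^'d) set" where
  "edom f = {y. f y < \<infinity>}"

text \<open>Convex hull of the finite family f i, i in I (Isabelle convention 0 * \<infinity> = 0).\<close>
definition conv_fun :: "'i set \<Rightarrow> ('i \<Rightarrow> real^'d \<Rightarrow> ereal) \<Rightarrow> real^'d \<Rightarrow> ereal" where
  "conv_fun I f x = (INF p \<in> {(l, xs). (\<forall>i\<in>I. 0 \<le> l i \<and> l i \<le> 1) \<and> sum l I = 1
                                  \<and> (\<Sum>i\<in>I. l i *\<^sub>R xs i) = x}.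
                       (\<Sum>i\<in>I. ereal (fst p i) * f i (snd p i)))"

definition sigma_j :: "'d \<Rightarrow> (real^'d) set \<Rightarrow> (real^'d) set" where
  "sigma_j j A = {x\<in>A. x $ j = 1}"

definition compactly_generated :: "'d \<Rightarrow> (real^'d) set \<Rightarrow> bool" where
  "compactly_generated j A \<longleftrightarrow> compact (sigma_j j A) \<and> sigma_j j A \<noteq> {}
      \<and> A = {c *\<^sub>R x | c x. 0 \<le> c \<and> x \<in> sigma_j j A}"

definition Ufun where "Ufun Om F T rate xi t \<mu> = support_fun (uminus ` Uad Om F T rate xi t \<mu>)"
definition Vfun where "Vfun Om F T rate xi t \<mu> = support_fun (uminus ` Vad Om F T rate xi t \<mu>)"
definition Wfun where "Wfun Om F T rate xi t \<mu> = support_fun (uminus ` Wad Om F T rate xi t \<mu>)"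
definition Zfun where "Zfun Om F T rate xi t \<mu> = support_fun (uminus ` Zad Om F T rate xi t \<mu>)"

end

theory Submission
  imports Defs
begin

text \<open>The deferred solvency cones satisfy \<open>Q\<^sub>t\<^sup>\<mu> = K\<^sub>t\<^sup>\<mu> + \<Inter>\<^sub>\<nu> Q\<^sub>t\<^sub>+\<^sub>1\<^sup>\<nu>\<close>, so they are
  finitely generated. They contain the unit vectors and the exchanges \<open>\<pi>\<^sup>j\<^sup>k e\<^sub>j - e\<^sub>k\<close>, which confine a
  dual vector to \<open>0 \<le> y\<^sub>k \<le> \<pi>\<^sup>j\<^sup>k y\<^sub>j\<close>; no arbitrage excludes \<open>-e\<^sub>j\<close>, and Farkas' lemma turns
  this into a dual vector with \<open>y\<^sub>j > 0\<close>. Hence the dual cones are compactly \<open>j\<close>-generated.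

  All sets of the construction are polyhedra. Writing a polyhedron as the height-one section of
  a finitely generated cone, and using that the dual of an intersection of such cones is the sum
  of their duals, the support function of a finite intersection of polyhedra is the exact
  infimal convolution of their support functions. Applied to \<open>Z = U \<inter> V\<close> and
  \<open>W = \<Inter>\<^sub>\<nu> Z\<^sub>t\<^sub>+\<^sub>1\<^sup>\<nu>\<close> and normalised by the \<open>j\<close>-th coordinate, this gives the convex hull
  representations with attained infima. Adding the cone \<open>Q\<close> to a set restricts its support
  function to the dual cone \<open>Q\<^sup>*\<close>, which gives the formulas for \<open>U\<close> and \<open>V\<close>.\<close>

section \<open>Dual cones\<close>

definition cone_dual :: "'a::real_inner set \<Rightarrow> 'a set" where
  "cone_dual C = {y. \<forall>x\<in>C. 0 \<le> y \<bullet> x}"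

definition finitely_generated_cone :: "'a::real_vector set \<Rightarrow> bool" where
  "finitely_generated_cone C \<longleftrightarrow> (\<exists>G. finite G \<and> C = convex_cone hull G)"

lemma dual_cone_eq_cone_dual: "dual_cone A = cone_dual A"
  unfolding dual_cone_def cone_dual_def ..

lemma convex_cone_cone_dual: "convex_cone (cone_dual C)"
  unfolding convex_cone_iff cone_dual_def by (auto simp: inner_left_distrib)

lemma closed_cone_dual: "closed (cone_dual (C :: 'a::real_inner set))"
proof -
  have "cone_dual C = (\<Inter>x\<in>C. {y. 0 \<le> y \<bullet> x})" unfolding cone_dual_def by auto
  then show ?thesis by (auto intro!: closed_INT closed_Collect_le continuous_intros)
qed

lemma cone_dual_antimono: "A \<subseteq> B \<Longrightarrow> cone_dual B \<subseteq> cone_dual A"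
  unfolding cone_dual_def by blast

lemma finitely_generated_cone_hull: "finite G \<Longrightarrow> finitely_generated_cone (convex_cone hull G)"
  unfolding finitely_generated_cone_def by blast

lemma finitely_generated_imp_convex_cone: "finitely_generated_cone C \<Longrightarrow> convex_cone C"
  unfolding finitely_generated_cone_def using convex_cone_convex_cone_hull by blast

lemma finitely_generated_imp_closed:
  "finitely_generated_cone (C :: 'a::euclidean_space set) \<Longrightarrow> closed C"
  unfolding finitely_generated_cone_def using closed_convex_cone_hull by blast

lemma convex_cone_sum:
  assumes "convex_cone C" "finite I" "\<And>i. i \<in> I \<Longrightarrow> f i \<in> C"
  shows "(\<Sum>i\<in>I. f i) \<in> C"
  using assms(2,3)
  by (induction I rule: finite_induct)
     (auto intro: convex_cone_add[OF assms(1)] convex_cone_contains_0[OF assms(1)])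

lemma cone_dual_separation:
  fixes C :: "'a::euclidean_space set"
  assumes "convex_cone C" "closed C" "x \<notin> C"
  obtains y where "y \<in> cone_dual C" "y \<bullet> x < 0"
proof -
  obtain a b where ab: "a \<bullet> x < b" "\<forall>c\<in>C. b < a \<bullet> c"
    using separating_hyperplane_closed_point[of C x] assms by (auto simp: convex_cone_def)
  have b0: "b < 0" using ab(2) convex_cone_contains_0[OF assms(1)] by fastforce
  have "0 \<le> a \<bullet> c" if "c \<in> C" for c
  proof (rule ccontr)
    assume neg: "\<not> 0 \<le> a \<bullet> c"
    have "(b / (a \<bullet> c)) *\<^sub>R c \<in> C"
      using neg b0 by (intro convex_cone_scaleR[OF assms(1) _ that]) (simp add: divide_nonpos_neg)
    then show False using ab(2) neg by fastforce
  qed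
  then have "a \<in> cone_dual C" by (simp add: cone_dual_def)
  then show thesis using that ab(1) b0 by fastforce
qed

lemma cone_dual_cone_dual:
  fixes C :: "'a::euclidean_space set"
  assumes "convex_cone C" "closed C"
  shows "cone_dual (cone_dual C) = C"
proof
  show "C \<subseteq> cone_dual (cone_dual C)"
    unfolding cone_dual_def by (auto simp: inner_commute)
  show "cone_dual (cone_dual C) \<subseteq> C"
  proof
    fix x assume x: "x \<in> cone_dual (cone_dual C)"
    show "x \<in> C"
    proof (rule ccontr)
      assume "x \<notin> C"
      then obtain y where "y \<in> cone_dual C" "y \<bullet> x < 0"
        using cone_dual_separation assms by blast
      moreover have "0 \<le> x \<bullet> y" using x \<open>y \<in> cone_dual C\<close> unfolding cone_dual_def by blast
      ultimately show False by (simp add: inner_commute)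
    qed
  qed
qed

lemma convex_cone_halfspace_imp_le_0:
  assumes "convex_cone C" "C \<subseteq> {x. a \<bullet> x \<le> b}" "x \<in> C"
  shows "a \<bullet> x \<le> 0"
proof (rule ccontr)
  assume "\<not> a \<bullet> x \<le> 0"
  then have pos: "a \<bullet> x > 0" by simp
  have b0: "0 \<le> b" using assms(2) convex_cone_contains_0[OF assms(1)] by auto
  have "((b + 1) / (a \<bullet> x)) *\<^sub>R x \<in> C"
    using b0 pos by (intro convex_cone_scaleR[OF assms(1) _ assms(3)]) simp
  then show False using assms(2) pos by fastforce
qed

text \<open>The dual of a finitely generated cone is generated by the outer normals of the finitely
  many halfspaces cutting it out (Minkowski--Weyl), and bipolarity identifies the two.\<close>

lemma finitely_generated_cone_dual:
  fixes C :: "'a::euclidean_space set"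
  assumes "finitely_generated_cone C"
  shows "finitely_generated_cone (cone_dual C)"
proof -
  have cc: "convex_cone C" using assms finitely_generated_imp_convex_cone by blast
  have "polyhedron C"
    using assms polyhedron_convex_cone_hull unfolding finitely_generated_cone_def by blast
  then obtain H where H: "finite H" "C = \<Inter>H" "\<forall>h\<in>H. \<exists>a b. a \<noteq> 0 \<and> h = {x. a \<bullet> x \<le> b}"
    unfolding polyhedron_def by blast
  obtain a b where ab: "\<And>h x. h \<in> H \<Longrightarrow> x \<in> h \<longleftrightarrow> a h \<bullet> x \<le> b h"
    using H(3) by (metis mem_Collect_eq)
  define D where "D = convex_cone hull ((\<lambda>h. - a h) ` H)"
  have "- a h \<in> cone_dual C" if h: "h \<in> H" for h
  proof -
    have "C \<subseteq> {x. a h \<bullet> x \<le> b h}" using ab[OF h] h H(2) by auto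
    then have "a h \<bullet> x \<le> 0" if "x \<in> C" for x
      using convex_cone_halfspace_imp_le_0[OF cc _ that] by blast
    then show ?thesis unfolding cone_dual_def by simp
  qed
  then have DC: "D \<subseteq> cone_dual C"
    unfolding D_def by (intro hull_minimal convex_cone_cone_dual) blast
  have "cone_dual D \<subseteq> C"
  proof
    fix z assume z: "z \<in> cone_dual D"
    have "z \<in> h" if h: "h \<in> H" for h
    proof -
      have "- a h \<in> D" unfolding D_def using h by (simp add: hull_inc)
      then have "0 \<le> z \<bullet> - a h" using z unfolding cone_dual_def by blast
      moreover have "0 \<in> h" using convex_cone_contains_0[OF cc] H(2) h by blast
      ultimately show ?thesis using ab[OF h] by (simp add: inner_commute)
    qed
    then show "z \<in> C" using H(2) by blast
  qed
  then have "cone_dual C \<subseteq> cone_dual (cone_dual D)" by (rule cone_dual_antimono)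
  also have "\<dots> = D" unfolding D_def
    using H(1) by (intro cone_dual_cone_dual convex_cone_convex_cone_hull closed_convex_cone_hull) simp
  finally have "cone_dual C = D" using DC by blast
  then show ?thesis unfolding D_def using H(1) by (simp add: finitely_generated_cone_hull)
qed

lemma finitely_generated_cone_plus:
  assumes "finitely_generated_cone A" "finitely_generated_cone B"
  shows "finitely_generated_cone (A + B)"
proof -
  obtain G G' where "finite G" "A = convex_cone hull G" "finite G'" "B = convex_cone hull G'"
    using assms unfolding finitely_generated_cone_def by blast
  moreover have "convex_cone hull (G \<union> G') = convex_cone hull G + convex_cone hull G'"
    unfolding convex_cone_hull_Un set_plus_def by blast
  ultimately show ?thesis unfolding finitely_generated_cone_def by (metis finite_UnI)
qed

lemma finitely_generated_cone_sum:
  fixes C :: "'i \<Rightarrow> 'a::real_vector set"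
  assumes "finite I" "\<And>i. i \<in> I \<Longrightarrow> finitely_generated_cone (C i)"
  shows "finitely_generated_cone (\<Sum>i\<in>I. C i)"
  using assms
proof (induction I rule: finite_induct)
  case empty
  have "convex_cone hull {} = (0 :: 'a set)" by simp
  then show ?case using finitely_generated_cone_hull[of "{} :: 'a set"] by simp
qed (simp add: finitely_generated_cone_plus)

lemma finitely_generated_cone_linear_image:
  "linear f \<Longrightarrow> finitely_generated_cone C \<Longrightarrow> finitely_generated_cone (f ` C)"
  unfolding finitely_generated_cone_def by (metis convex_cone_hull_linear_image finite_imageI)

lemma cone_dual_sum:
  assumes "finite I" "\<And>i. i \<in> I \<Longrightarrow> convex_cone (C i)"
  shows "cone_dual (\<Sum>i\<in>I. C i) = (\<Inter>i\<in>I. cone_dual (C i))"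
proof
  show "cone_dual (\<Sum>i\<in>I. C i) \<subseteq> (\<Inter>i\<in>I. cone_dual (C i))"
  proof (intro subsetI INT_I)
    fix y i assume y: "y \<in> cone_dual (\<Sum>i\<in>I. C i)" and i: "i \<in> I"
    have "z \<in> (\<Sum>i\<in>I. C i)" if "z \<in> C i" for z
    proof -
      have "(\<Sum>k\<in>I. if k = i then z else 0) = z" using assms(1) i by simp
      moreover have "\<forall>k\<in>I. (if k = i then z else 0) \<in> C k"
        using that assms(2) convex_cone_contains_0 by auto
      ultimately show ?thesis unfolding set_sum_alt[OF assms(1)] by (smt (verit) mem_Collect_eq)
    qed
    then show "y \<in> cone_dual (C i)" using y unfolding cone_dual_def by blast
  qed
  show "(\<Inter>i\<in>I. cone_dual (C i)) \<subseteq> cone_dual (\<Sum>i\<in>I. C i)"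
    unfolding set_sum_alt[OF assms(1)] cone_dual_def
    by (force simp: inner_sum_right intro: sum_nonneg)
qed

lemma
  fixes C :: "'i \<Rightarrow> 'a::euclidean_space set"
  assumes "finite I" "\<And>i. i \<in> I \<Longrightarrow> finitely_generated_cone (C i)"
  shows finitely_generated_cone_INT: "finitely_generated_cone (\<Inter>i\<in>I. C i)"
    and cone_dual_INT: "cone_dual (\<Inter>i\<in>I. C i) = (\<Sum>i\<in>I. cone_dual (C i))"
proof -
  define D where "D = (\<Sum>i\<in>I. cone_dual (C i))"
  have fD: "finitely_generated_cone D"
    unfolding D_def using assms by (intro finitely_generated_cone_sum finitely_generated_cone_dual)
  have "cone_dual D = (\<Inter>i\<in>I. cone_dual (cone_dual (C i)))"
    unfolding D_def using assms(1) by (rule cone_dual_sum) (rule convex_cone_cone_dual)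
  also have "\<dots> = (\<Inter>i\<in>I. C i)"
    using assms(2) by (simp add: cone_dual_cone_dual finitely_generated_imp_convex_cone
      finitely_generated_imp_closed)
  finally have eq: "cone_dual D = (\<Inter>i\<in>I. C i)" .
  show "finitely_generated_cone (\<Inter>i\<in>I. C i)"
    using eq finitely_generated_cone_dual[OF fD] by simp
  show "cone_dual (\<Inter>i\<in>I. C i) = D"
    unfolding eq[symmetric]
    by (rule cone_dual_cone_dual[OF finitely_generated_imp_convex_cone[OF fD]
          finitely_generated_imp_closed[OF fD]])
qed

section \<open>Support functions of polyhedra\<close>

definition neg_support :: "'a::real_inner set \<Rightarrow> 'a \<Rightarrow> ereal" where
  "neg_support S y = (SUP x\<in>S. ereal (- (y \<bullet> x)))"

lemma support_fun_uminus: "support_fun (uminus ` S) = neg_support S"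
  unfolding support_fun_def neg_support_def image_image by simp

lemma neg_support_upper: "x \<in> S \<Longrightarrow> ereal (- (y \<bullet> x)) \<le> neg_support S y"
  unfolding neg_support_def by (rule SUP_upper)

lemma neg_support_least:
  "(\<And>x. x \<in> S \<Longrightarrow> ereal (- (y \<bullet> x)) \<le> b) \<Longrightarrow> neg_support S y \<le> b"
  unfolding neg_support_def by (rule SUP_least)

lemma neg_support_mono: "S \<subseteq> S' \<Longrightarrow> neg_support S y \<le> neg_support S' y"
  unfolding neg_support_def by (rule SUP_subset_mono) auto

lemma neg_support_gt_MInfty:
  assumes "S \<noteq> {}" shows "-\<infinity> < neg_support S y"
proof -
  obtain x where "x \<in> S" using assms by blast
  then have "ereal (- (y \<bullet> x)) \<le> neg_support S y" by (rule neg_support_upper)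
  then show ?thesis by (rule less_le_trans[rotated]) simp
qed

lemma neg_support_scaleR:
  assumes "S \<noteq> {}" "0 \<le> c"
  shows "neg_support S (c *\<^sub>R y) = ereal c * neg_support S y"
proof -
  have "ereal c * neg_support S y = (SUP x\<in>S. ereal c * ereal (- (y \<bullet> x)))"
    unfolding neg_support_def using assms by (rule Sup_ereal_mult_left')
  then show ?thesis unfolding neg_support_def by simp
qed

lemma neg_support_INT_le:
  assumes "finite I" "(\<Sum>i\<in>I. z i) = y" "\<And>i. i \<in> I \<Longrightarrow> S \<subseteq> S' i"
  shows "neg_support S y \<le> (\<Sum>i\<in>I. neg_support (S' i) (z i))"
proof (rule neg_support_least)
  fix x assume x: "x \<in> S"
  have "ereal (- (y \<bullet> x)) = (\<Sum>i\<in>I. ereal (- (z i \<bullet> x)))"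
    unfolding assms(2)[symmetric] by (simp add: inner_sum_left sum_negf)
  also have "\<dots> \<le> (\<Sum>i\<in>I. neg_support (S' i) (z i))"
    using x assms(3) by (intro sum_mono neg_support_upper) blast
  finally show "ereal (- (y \<bullet> x)) \<le> (\<Sum>i\<in>I. neg_support (S' i) (z i))" .
qed

lemma neg_support_recession_direction:
  assumes "s \<in> S" "\<And>t. 0 \<le> t \<Longrightarrow> s + t *\<^sub>R q \<in> S" "y \<bullet> q < 0"
  shows "neg_support S y = \<infinity>"
proof (rule ccontr)
  assume "neg_support S y \<noteq> \<infinity>"
  moreover have "-\<infinity> < neg_support S y" using assms(1) neg_support_gt_MInfty by blast
  ultimately obtain R where R: "neg_support S y = ereal R" by (cases "neg_support S y") auto
  define t where "t = (R + y \<bullet> s + 1) / - (y \<bullet> q)"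
  have "ereal (- (y \<bullet> (s + max 0 t *\<^sub>R q))) \<le> ereal R"
    using neg_support_upper[OF assms(2), of "max 0 t" y] R by simp
  then have "max 0 t * - (y \<bullet> q) \<le> R + y \<bullet> s" by (simp add: inner_add_right)
  moreover have "t * - (y \<bullet> q) = R + y \<bullet> s + 1" using assms(3) by (simp add: t_def)
  moreover have "t * - (y \<bullet> q) \<le> max 0 t * - (y \<bullet> q)"
    using assms(3) by (intro mult_right_mono) auto
  ultimately show False by linarith
qed

lemma neg_support_translation_invariant:
  assumes "S \<noteq> {}" "\<And>s q. s \<in> S \<Longrightarrow> q \<in> Q \<Longrightarrow> s + q \<in> S" "convex_cone Q" "y \<notin> cone_dual Q"
  shows "neg_support S y = \<infinity>"
proof -
  obtain s q where "s \<in> S" "q \<in> Q" "y \<bullet> q < 0"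
    using assms(1,4) unfolding cone_dual_def by force
  then show ?thesis
    using assms(2,3) by (intro neg_support_recession_direction) (auto intro: convex_cone_scaleR)
qed

text \<open>\<open>homogenizes H S\<close>: the set \<open>S\<close> is the height-one section of the finitely generated
  cone \<open>H\<close> in the upper half-space, so \<open>S\<close> is a polyhedron and \<open>H\<close> its homogenization.
  The dual cone of \<open>H\<close> is then the epigraph of \<open>neg_support S\<close>.\<close>

definition homogenizes :: "('a::euclidean_space \<times> real) set \<Rightarrow> 'a set \<Rightarrow> bool" where
  "homogenizes H S \<longleftrightarrow> finitely_generated_cone H \<and> (\<forall>p\<in>H. 0 \<le> snd p) \<and> S = {x. (x, 1) \<in> H}"

lemma homogenizes_section:
  assumes "homogenizes H S" "(x, l) \<in> H" "0 < l"
  shows "(1 / l) *\<^sub>R x \<in> S"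
proof -
  have "convex_cone H" using assms(1) finitely_generated_imp_convex_cone homogenizes_def by blast
  then have "(1 / l) *\<^sub>R (x, l) \<in> H"
    using assms(2,3) by (intro convex_cone_scaleR) simp_all
  moreover have "(1 / l) *\<^sub>R (x, l) = ((1 / l) *\<^sub>R x, 1)" using assms(3) by simp
  ultimately show ?thesis using assms(1) unfolding homogenizes_def by simp
qed

lemma homogenizes_recession:
  assumes "homogenizes H S" "(x, 0) \<in> H" "s \<in> S" "0 \<le> t"
  shows "s + t *\<^sub>R x \<in> S"
proof -
  have cc: "convex_cone H" using assms(1) finitely_generated_imp_convex_cone homogenizes_def by blast
  have "(s, 1) + t *\<^sub>R (x, 0) \<in> H"
    using assms convex_cone_add[OF cc] convex_cone_scaleR[OF cc] unfolding homogenizes_def by blast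
  then show ?thesis using assms(1) unfolding homogenizes_def by simp
qed

lemma neg_support_le_if_cone_dual:
  assumes "homogenizes H S" "(y, \<beta>) \<in> cone_dual H"
  shows "neg_support S y \<le> ereal \<beta>"
proof (rule neg_support_least)
  fix x assume "x \<in> S"
  then have "0 \<le> (y, \<beta>) \<bullet> (x, 1)" using assms unfolding homogenizes_def cone_dual_def by blast
  then show "ereal (- (y \<bullet> x)) \<le> ereal \<beta>" by simp
qed

lemma cone_dual_if_neg_support_le:
  assumes hom: "homogenizes H S" and "S \<noteq> {}" and le: "neg_support S y \<le> ereal \<beta>"
  shows "(y, \<beta>) \<in> cone_dual H"
proof -
  have le': "- (y \<bullet> x) \<le> \<beta>" if "x \<in> S" for x
    using neg_support_upper[OF that, of y] le by (meson ereal_less_eq(3) order_trans)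
  have "0 \<le> (y, \<beta>) \<bullet> (x, l)" if p: "(x, l) \<in> H" for x l
  proof -
    have "0 \<le> l" using p hom unfolding homogenizes_def by fastforce
    then consider "0 < l" | "l = 0" by linarith
    then show ?thesis
    proof cases
      case 1
      then have "- (y \<bullet> ((1 / l) *\<^sub>R x)) \<le> \<beta>" by (intro le' homogenizes_section[OF hom p])
      then show ?thesis using 1 by (simp add: field_simps)
    next
      case 2
      have "neg_support S y \<noteq> \<infinity>" using le by auto
      then have "\<not> y \<bullet> x < 0"
        using neg_support_recession_direction homogenizes_recession[OF hom] p 2 \<open>S \<noteq> {}\<close>
        by (metis ex_in_conv)
      then show ?thesis using 2 by simp
    qed
  qed
  then show ?thesis unfolding cone_dual_def by auto
qed

lemma homogenizes_INT:
  assumes "finite I" "I \<noteq> {}" "\<And>i. i \<in> I \<Longrightarrow> homogenizes (H i) (S i)"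
  shows "homogenizes (\<Inter>i\<in>I. H i) (\<Inter>i\<in>I. S i)"
proof -
  have "finitely_generated_cone (\<Inter>i\<in>I. H i)"
    using assms(1,3) by (intro finitely_generated_cone_INT) (auto simp: homogenizes_def)
  moreover obtain i where "i \<in> I" using assms(2) by blast
  then have "\<forall>p\<in>(\<Inter>i\<in>I. H i). 0 \<le> snd p" using assms(3) unfolding homogenizes_def by blast
  moreover have "(\<Inter>i\<in>I. S i) = {x. (x, 1) \<in> (\<Inter>i\<in>I. H i)}"
    using assms(3) unfolding homogenizes_def by blast
  ultimately show ?thesis unfolding homogenizes_def by blast
qed

lemma homogenizes_Int: "homogenizes H S \<Longrightarrow> homogenizes H' S' \<Longrightarrow> homogenizes (H \<inter> H') (S \<inter> S')"
  using homogenizes_INT[of UNIV "\<lambda>b. if b then H else H'" "\<lambda>b. if b then S else S'"]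
  by (simp add: UNIV_bool Int_commute)

lemma linear_pair_zero: "linear (\<lambda>q::'a::real_vector. (q, 0::real))"
  by (rule linearI) auto

lemma homogenizes_plus:
  assumes "homogenizes H S" "finitely_generated_cone Q"
  shows "homogenizes (H + (\<lambda>q. (q, 0)) ` Q) (S + Q)"
proof -
  have "S + Q = {x. (x, 1) \<in> H + (\<lambda>q. (q, 0)) ` Q}"
  proof (intro set_eqI iffI)
    fix x assume "x \<in> S + Q"
    then obtain s q where "x = s + q" "s \<in> S" "q \<in> Q" by (rule set_plus_elim)
    moreover have "(s, 1) \<in> H" using \<open>s \<in> S\<close> assms(1) unfolding homogenizes_def by blast
    ultimately have "(s, 1) + (q, 0) \<in> H + (\<lambda>q. (q, 0::real)) ` Q" by blast
    then show "x \<in> {x. (x, 1) \<in> H + (\<lambda>q. (q, 0)) ` Q}" using \<open>x = s + q\<close> by simp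
  next
    fix x assume "x \<in> {x. (x, 1) \<in> H + (\<lambda>q. (q, 0)) ` Q}"
    then obtain h q where hq: "(x, 1) = h + (q, 0)" "h \<in> H" "q \<in> Q"
      by (auto elim: set_plus_elim)
    then have "h = (x - q, 1)" by (cases h) auto
    then have "x - q \<in> S" using hq(2) assms(1) unfolding homogenizes_def by auto
    then show "x \<in> S + Q" using hq(3) by (metis diff_add_cancel set_plus_intro)
  qed
  then show ?thesis
    using assms unfolding homogenizes_def
    by (auto intro!: finitely_generated_cone_plus finitely_generated_cone_linear_image
        linear_pair_zero elim!: set_plus_elim)
qed

lemma convex_cone_hull_singleton: "convex_cone hull {p} = {c *\<^sub>R p | c. 0 \<le> c}"
  unfolding convex_cone_hull_convex_hull by (auto intro: exI[of _ 0])

lemma homogenizes_translation: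
  assumes "finitely_generated_cone Q"
  shows "homogenizes (convex_cone hull {(a, 1)} + (\<lambda>q. (q, 0)) ` Q) ((\<lambda>q. a + q) ` Q)"
proof -
  have "homogenizes (convex_cone hull {(a, 1)}) {a}"
    using finitely_generated_cone_hull[of "{(a, 1::real)}"]
    unfolding homogenizes_def by (auto simp: convex_cone_hull_singleton real_scaleR_def)
  moreover have "{a} + Q = (\<lambda>q. a + q) ` Q" unfolding set_plus_def by auto
  ultimately show ?thesis using homogenizes_plus[OF _ assms] by metis
qed

text \<open>The support function of a finite intersection of polyhedra is the exact infimal
  convolution of their support functions: dualizing the intersection of the homogenizations
  splits \<open>(y, neg_support S y)\<close> into a sum of points of the individual epigraphs.\<close>

lemma neg_support_INT_exact:
  assumes fin: "finite I" and "I \<noteq> {}" and hom: "\<And>i. i \<in> I \<Longrightarrow> homogenizes (H i) (S i)"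
    and ne: "(\<Inter>i\<in>I. S i) \<noteq> {}" and lt: "neg_support (\<Inter>i\<in>I. S i) y < \<infinity>"
  obtains z where "(\<Sum>i\<in>I. z i) = y" "\<And>i. i \<in> I \<Longrightarrow> neg_support (S i) (z i) < \<infinity>"
    "neg_support (\<Inter>i\<in>I. S i) y = (\<Sum>i\<in>I. neg_support (S i) (z i))"
proof -
  obtain r where r: "neg_support (\<Inter>i\<in>I. S i) y = ereal r"
    using lt neg_support_gt_MInfty[OF ne] by (cases "neg_support (\<Inter>i\<in>I. S i) y") auto
  have "(y, r) \<in> cone_dual (\<Inter>i\<in>I. H i)"
    using r by (intro cone_dual_if_neg_support_le[OF homogenizes_INT[OF fin assms(2) hom] ne] eq_refl)
  also have "\<dots> = (\<Sum>i\<in>I. cone_dual (H i))"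
    using fin hom by (intro cone_dual_INT) (auto simp: homogenizes_def)
  finally obtain p where p: "(y, r) = (\<Sum>i\<in>I. p i)" "\<And>i. i \<in> I \<Longrightarrow> p i \<in> cone_dual (H i)"
    unfolding set_sum_alt[OF fin] by blast
  define z where "z i = fst (p i)" for i
  have y: "(\<Sum>i\<in>I. z i) = y" unfolding z_def using p(1) by (metis fst_conv fst_sum)
  have "(\<Sum>i\<in>I. snd (p i)) = r" using p(1) by (metis snd_conv snd_sum)
  have le: "neg_support (S i) (z i) \<le> ereal (snd (p i))" if "i \<in> I" for i
    using neg_support_le_if_cone_dual[OF hom[OF that]] p(2)[OF that] unfolding z_def by simp
  have "neg_support (\<Inter>i\<in>I. S i) y \<le> (\<Sum>i\<in>I. neg_support (S i) (z i))"
    by (rule neg_support_INT_le[OF fin y]) blast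
  moreover have "(\<Sum>i\<in>I. neg_support (S i) (z i)) \<le> (\<Sum>i\<in>I. ereal (snd (p i)))"
    using le by (rule sum_mono)
  moreover have "(\<Sum>i\<in>I. ereal (snd (p i))) = neg_support (\<Inter>i\<in>I. S i) y"
    using r \<open>(\<Sum>i\<in>I. snd (p i)) = r\<close> by simp
  moreover have "neg_support (S i) (z i) < \<infinity>" if "i \<in> I" for i
    using le[OF that] by (rule le_less_trans) simp
  ultimately show thesis using that y by simp
qed

lemma conv_fun_neg_support_INT:
  fixes S :: "'i \<Rightarrow> (real^'d) set"
  assumes fin: "finite I" and "I \<noteq> {}" and hom: "\<And>i. i \<in> I \<Longrightarrow> homogenizes (H i) (S i)"
    and ne: "(\<Inter>i\<in>I. S i) \<noteq> {}"
  shows "conv_fun I (\<lambda>i. neg_support (S i)) = neg_support (\<Inter>i\<in>I. S i)"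
proof
  fix x :: "real^'d"
  define A where "A = {(l, xs). (\<forall>i\<in>I. 0 \<le> l i \<and> l i \<le> 1) \<and> sum l I = 1
                                  \<and> (\<Sum>i\<in>I. l i *\<^sub>R xs i) = x}"
  define f where "f p = (\<Sum>i\<in>I. ereal (fst p i) * neg_support (S i) (snd p i))" for p
  have cf: "conv_fun I (\<lambda>i. neg_support (S i)) x = (INF p\<in>A. f p)"
    unfolding conv_fun_def A_def f_def ..
  have Sne: "S i \<noteq> {}" if "i \<in> I" for i using ne that by blast
  have "neg_support (\<Inter>i\<in>I. S i) x \<le> f p" if pA: "p \<in> A" for p
  proof -
    obtain l xs where p: "p = (l, xs)" "\<forall>i\<in>I. 0 \<le> l i" "(\<Sum>i\<in>I. l i *\<^sub>R xs i) = x"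
      using pA unfolding A_def by auto
    have "neg_support (\<Inter>i\<in>I. S i) x \<le> (\<Sum>i\<in>I. neg_support (S i) (l i *\<^sub>R xs i))"
      using p(3) by (intro neg_support_INT_le[OF fin]) auto
    also have "\<dots> = f p"
      unfolding f_def p(1) using p(2) Sne by (intro sum.cong refl) (simp add: neg_support_scaleR)
    finally show ?thesis .
  qed
  then have "neg_support (\<Inter>i\<in>I. S i) x \<le> (INF p\<in>A. f p)" by (rule INF_greatest)
  moreover have "(INF p\<in>A. f p) \<le> neg_support (\<Inter>i\<in>I. S i) x"
  proof (cases "neg_support (\<Inter>i\<in>I. S i) x < \<infinity>")
    case True
    then obtain z where z: "(\<Sum>i\<in>I. z i) = x"
      "neg_support (\<Inter>i\<in>I. S i) x = (\<Sum>i\<in>I. neg_support (S i) (z i))"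
      using neg_support_INT_exact[OF assms] by blast
    define n where "n = real (card I)"
    have n: "1 \<le> n" unfolding n_def using fin assms(2) by (simp add: Suc_leI card_gt_0_iff)
    have "((\<lambda>i. 1 / n), (\<lambda>i. n *\<^sub>R z i)) \<in> A"
      using n z(1) unfolding A_def n_def by simp
    then have "(INF p\<in>A. f p) \<le> f ((\<lambda>i. 1 / n), (\<lambda>i. n *\<^sub>R z i))" by (rule INF_lower)
    also have "\<dots> = (\<Sum>i\<in>I. neg_support (S i) (z i))"
      unfolding f_def using n Sne by (intro sum.cong refl) (simp add: neg_support_scaleR[symmetric])
    also have "\<dots> = neg_support (\<Inter>i\<in>I. S i) x" using z(2) by simp
    finally show ?thesis .
  qed (simp add: top.not_eq_extremum)
  ultimately show "conv_fun I (\<lambda>i. neg_support (S i)) x = neg_support (\<Inter>i\<in>I. S i) x"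
    unfolding cf by simp
qed

lemma neg_support_translated_cone:
  assumes "convex_cone Q"
  shows "neg_support ((\<lambda>q. a + q) ` Q) y = (if y \<in> cone_dual Q then ereal (- (y \<bullet> a)) else \<infinity>)"
proof (cases "y \<in> cone_dual Q")
  case True
  have "neg_support ((\<lambda>q. a + q) ` Q) y \<le> ereal (- (y \<bullet> a))"
    using True by (intro neg_support_least) (auto simp: cone_dual_def inner_add_right)
  moreover have "ereal (- (y \<bullet> (a + 0))) \<le> neg_support ((\<lambda>q. a + q) ` Q) y"
    using convex_cone_contains_0[OF assms] by (intro neg_support_upper) blast
  ultimately show ?thesis using True by simp
next
  case False
  have "(\<lambda>q. a + q) ` Q \<noteq> {}" using convex_cone_nonempty[OF assms] by blast
  moreover have "s + q \<in> (\<lambda>q. a + q) ` Q" if "s \<in> (\<lambda>q. a + q) ` Q" "q \<in> Q" for s q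
    using that convex_cone_add[OF assms] by (auto simp: add.assoc)
  ultimately show ?thesis using neg_support_translation_invariant[OF _ _ assms False] False by simp
qed

lemma neg_support_plus_cone:
  assumes "W \<noteq> {}" "convex_cone Q"
  shows "neg_support (W + Q) y = (if y \<in> cone_dual Q then neg_support W y else \<infinity>)"
proof (cases "y \<in> cone_dual Q")
  case True
  have "neg_support (W + Q) y \<le> neg_support W y"
  proof (rule neg_support_least)
    fix x assume "x \<in> W + Q"
    then obtain w q where wq: "x = w + q" "w \<in> W" "q \<in> Q" by (rule set_plus_elim)
    then have "ereal (- (y \<bullet> x)) \<le> ereal (- (y \<bullet> w))"
      using True by (auto simp: cone_dual_def inner_add_right)
    also have "\<dots> \<le> neg_support W y" using neg_support_upper[OF wq(2)] .
    finally show "ereal (- (y \<bullet> x)) \<le> neg_support W y" .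
  qed
  moreover have "W \<subseteq> W + Q" using set_zero_plus2[of Q W] convex_cone_contains_0[OF assms(2)]
    by (simp add: add.commute)
  then have "neg_support W y \<le> neg_support (W + Q) y" by (rule neg_support_mono)
  ultimately show ?thesis using True by simp
next
  case False
  have "W + Q \<noteq> {}" using assms convex_cone_nonempty by (auto simp: set_plus_def)
  moreover have "s + q \<in> W + Q" if "s \<in> W + Q" "q \<in> Q" for s q
    using that convex_cone_add[OF assms(2)]
    by (auto elim!: set_plus_elim) (metis add.assoc set_plus_intro)
  ultimately show ?thesis using neg_support_translation_invariant[OF _ _ assms(2) False] False by simp
qed

lemma neg_support_Int_exact:
  assumes "homogenizes H S" "homogenizes H' S'" "S \<inter> S' \<noteq> {}" "neg_support (S \<inter> S') y < \<infinity>"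
  obtains a b where "a + b = y" "neg_support S a < \<infinity>" "neg_support S' b < \<infinity>"
    "neg_support (S \<inter> S') y = neg_support S a + neg_support S' b"
proof -
  let ?H = "\<lambda>c. if c then H else H'" and ?S = "\<lambda>c. if c then S else S'"
  have eq: "(\<Inter>c\<in>UNIV. ?S c) = S \<inter> S'" by (auto simp: UNIV_bool)
  have hom: "\<And>c. c \<in> UNIV \<Longrightarrow> homogenizes (?H c) (?S c)" using assms(1,2) by simp
  obtain z where "(\<Sum>c\<in>UNIV. z c) = y" and lt: "\<And>c. c \<in> UNIV \<Longrightarrow> neg_support (?S c) (z c) < \<infinity>"
    "neg_support (\<Inter>c\<in>UNIV. ?S c) y = (\<Sum>c\<in>UNIV. neg_support (?S c) (z c))"
    using neg_support_INT_exact[of UNIV ?H ?S y, OF finite_class.finite_UNIV UNIV_not_empty hom]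
      assms(3,4) unfolding eq by blast
  moreover have "neg_support (?S True) (z True) < \<infinity>" "neg_support (?S False) (z False) < \<infinity>"
    by (rule lt, simp)+
  ultimately show thesis using that[of "z True" "z False"] unfolding eq by (simp add: UNIV_bool add.commute)
qed

lemma conv_fun_neg_support_Int:
  fixes S :: "(real^'d) set"
  assumes "homogenizes H S" "homogenizes H' S'" "S \<inter> S' \<noteq> {}"
  shows "conv_fun UNIV (\<lambda>c. if c then neg_support S else neg_support S') = neg_support (S \<inter> S')"
proof -
  let ?S = "\<lambda>c. if c then S else S'"
  have "(\<lambda>c. if c then neg_support S else neg_support S') = (\<lambda>c. neg_support (?S c))" by auto
  moreover have "(\<Inter>c\<in>UNIV. ?S c) = S \<inter> S'" by (auto simp: UNIV_bool)
  ultimately show ?thesis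
    using conv_fun_neg_support_INT[of UNIV "\<lambda>c. if c then H else H'" ?S] assms by auto
qed

section \<open>Compact generation of dual cones\<close>

lemma cone_dual_axis_component:
  "axis k 1 \<in> C \<Longrightarrow> y \<in> cone_dual C \<Longrightarrow> 0 \<le> (y :: real^'n) $ k"
  unfolding cone_dual_def by (auto simp: cart_eq_inner_axis)

lemma cone_dual_exchange_component:
  "r *\<^sub>R axis j 1 - axis k 1 \<in> C \<Longrightarrow> y \<in> cone_dual C \<Longrightarrow> (y :: real^'n) $ k \<le> r * y $ j"
  unfolding cone_dual_def by (fastforce simp: inner_diff_right cart_eq_inner_axis)

lemma closed_sigma_j_cone_dual: "closed (sigma_j j (cone_dual (C :: (real^'n) set)))"
proof -
  have "sigma_j j (cone_dual C) = cone_dual C \<inter> {x. axis j 1 \<bullet> x = 1}"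
    unfolding sigma_j_def by (auto simp: cart_eq_inner_axis inner_commute)
  then show ?thesis by (simp add: closed_Int closed_cone_dual closed_hyperplane)
qed

lemma bounded_sigma_j_cone_dual:
  fixes C :: "(real^'n) set"
  assumes "\<And>k. axis k 1 \<in> C" "\<And>k. r k *\<^sub>R axis j 1 - axis k 1 \<in> C"
  shows "bounded (sigma_j j (cone_dual C))"
  unfolding bounded_iff
proof (intro exI ballI)
  fix x assume x: "x \<in> sigma_j j (cone_dual C)"
  have "norm x \<le> (\<Sum>k\<in>UNIV. \<bar>x $ k\<bar>)" by (rule norm_le_l1_cart)
  also have "\<dots> \<le> (\<Sum>k\<in>UNIV. \<bar>r k\<bar>)"
  proof (intro sum_mono)
    fix k
    have "0 \<le> x $ k \<and> x $ k \<le> r k"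
      using cone_dual_axis_component[OF assms(1)] cone_dual_exchange_component[OF assms(2)] x
      unfolding sigma_j_def by fastforce
    then show "\<bar>x $ k\<bar> \<le> \<bar>r k\<bar>" by linarith
  qed
  finally show "norm x \<le> (\<Sum>k\<in>UNIV. \<bar>r k\<bar>)" .
qed

text \<open>A dual vector \<open>y\<close> satisfies \<open>0 \<le> y $ k \<le> r k * y $ j\<close>, so \<open>y $ j = 0\<close> forces \<open>y = 0\<close>; the
  slice \<open>y $ j = 1\<close> is non-empty because \<open>-e\<^sub>j \<notin> C\<close> is separated from \<open>C\<close> by a dual vector.\<close>

lemma compactly_generated_dual_cone:
  fixes C :: "(real^'n) set"
  assumes fg: "finitely_generated_cone C" and ax: "\<And>k. axis k 1 \<in> C"
    and ex: "\<And>k. r k *\<^sub>R axis j 1 - axis k 1 \<in> C" and nj: "- axis j 1 \<notin> C"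
  shows "compactly_generated j (dual_cone C)"
proof -
  let ?D = "cone_dual C"
  have ccD: "convex_cone ?D" by (rule convex_cone_cone_dual)
  have bnd: "0 \<le> y $ k \<and> y $ k \<le> r k * y $ j" if "y \<in> ?D" for y k
    using cone_dual_axis_component[OF ax that] cone_dual_exchange_component[OF ex that] by blast
  obtain y0 where y0: "y0 \<in> ?D" "y0 \<bullet> - axis j 1 < 0"
    using cone_dual_separation[OF finitely_generated_imp_convex_cone[OF fg]
        finitely_generated_imp_closed[OF fg] nj] by blast
  have y0j: "0 < y0 $ j" using y0(2) by (simp add: cart_eq_inner_axis)
  have scale: "(1 / y $ j) *\<^sub>R y \<in> sigma_j j ?D" if "y \<in> ?D" "0 < y $ j" for y
    using that convex_cone_scaleR[OF ccD, of "1 / y $ j" y] unfolding sigma_j_def by simp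
  have "y \<in> {c *\<^sub>R x | c x. 0 \<le> c \<and> x \<in> sigma_j j ?D}" if y: "y \<in> ?D" for y
  proof (cases "y $ j = 0")
    case True
    then have "y = 0 *\<^sub>R ((1 / y0 $ j) *\<^sub>R y0)"
      using bnd[OF y] by (simp add: vec_eq_iff) (meson order_antisym)
    then show ?thesis using scale[OF y0(1) y0j] by blast
  next
    case False
    then have "0 < y $ j" using bnd[OF y] by (simp add: order_less_le)
    moreover have "y = (y $ j) *\<^sub>R ((1 / y $ j) *\<^sub>R y)" using False by simp
    ultimately show ?thesis using scale[OF y] by fastforce
  qed
  then have "?D = {c *\<^sub>R x | c x. 0 \<le> c \<and> x \<in> sigma_j j ?D}"
    using convex_cone_scaleR[OF ccD] unfolding sigma_j_def by blast
  then show ?thesis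
    unfolding compactly_generated_def dual_cone_eq_cone_dual
    using closed_sigma_j_cone_dual bounded_sigma_j_cone_dual[OF ax ex] scale[OF y0(1) y0j]
      compact_eq_bounded_closed by blast
qed

lemma compactly_generated_decompose:
  assumes "compactly_generated j A" "y \<in> A"
  obtains s where "s \<in> sigma_j j A" "y = (y $ j) *\<^sub>R s" "0 \<le> y $ j"
proof -
  obtain c s where "y = c *\<^sub>R s" "0 \<le> c" "s \<in> sigma_j j A"
    using assms unfolding compactly_generated_def by blast
  moreover have "s $ j = 1" using \<open>s \<in> sigma_j j A\<close> unfolding sigma_j_def by blast
  ultimately show thesis using that by simp
qed

section \<open>Nodes, strategies and the deferred solvency cones\<close>

lemma adapted_const: "adapted F s (\<lambda>w. c)"
  unfolding adapted_def by simp

lemma adaptedD: "adapted F t X \<Longrightarrow> \<mu> \<in> F t \<Longrightarrow> w \<in> \<mu> \<Longrightarrow> w' \<in> \<mu> \<Longrightarrow> X w = X w'"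
  unfolding adapted_def by blast

lemma atnode_eq: "adapted F t X \<Longrightarrow> \<mu> \<in> F t \<Longrightarrow> w \<in> \<mu> \<Longrightarrow> atnode X \<mu> = X w"
  unfolding atnode_def by (metis adaptedD someI)

lemma finite_Kcone_generators:
  "finite (range (\<lambda>k. axis k (1::real)) \<union> {rate t w j k *\<^sub>R axis j 1 - axis k 1 | j k. True})"
proof -
  have "{rate t w j k *\<^sub>R axis j 1 - axis k 1 | j k. True}
      = (\<lambda>(j, k). rate t w j k *\<^sub>R axis j 1 - axis k (1::real)) ` UNIV"
    by auto
  then show ?thesis by simp
qed

lemma finitely_generated_Kcone: "finitely_generated_cone (Kcone rate t w)"
  unfolding Kcone_def by (rule finitely_generated_cone_hull[OF finite_Kcone_generators])

lemma convex_cone_Kcone: "convex_cone (Kcone rate t w)"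
  by (rule finitely_generated_imp_convex_cone[OF finitely_generated_Kcone])

lemma axis_in_Kcone: "axis k 1 \<in> Kcone rate t w"
  unfolding Kcone_def by (rule hull_inc) simp

lemma exchange_in_Kcone: "rate t w j k *\<^sub>R axis j 1 - axis k 1 \<in> Kcone rate t w"
  unfolding Kcone_def by (rule hull_inc) blast

lemma zero_in_Kcone: "0 \<in> Kcone rate t w"
  by (rule convex_cone_contains_0[OF convex_cone_Kcone])

lemma nonneg_in_Kcone:
  assumes "\<And>k. 0 \<le> x $ k" shows "x \<in> Kcone rate t w"
proof -
  have "(\<Sum>k\<in>UNIV. (x $ k) *\<^sub>R axis k 1) \<in> Kcone rate t w"
    using assms by (intro convex_cone_sum convex_cone_Kcone finite_class.finite_UNIV
        convex_cone_scaleR[OF convex_cone_Kcone _ axis_in_Kcone])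
  then show ?thesis using basis_expansion[of x] by (simp add: scalar_mult_eq_scaleR)
qed

locale filtered_market =
  fixes Om :: "'w set" and F :: "nat \<Rightarrow> 'w set set" and T :: nat
    and rate :: "nat \<Rightarrow> 'w \<Rightarrow> 'd::finite \<Rightarrow> 'd \<Rightarrow> real"
  assumes filt: "filtration Om F T"
    and rates: "exchange_rates Om F T rate"
begin

lemma finite_Om: "finite Om"
  using filt unfolding filtration_def by simp

lemma partition_atoms: "t \<le> T \<Longrightarrow> partition_on Om (F t)"
  using filt unfolding filtration_def by simp

lemma atom_refines_succ: "t < T \<Longrightarrow> \<nu> \<in> F (Suc t) \<Longrightarrow> \<exists>\<mu>\<in>F t. \<nu> \<subseteq> \<mu>"
  using filt unfolding filtration_def by simp

lemma atom_nonempty: "t \<le> T \<Longrightarrow> \<mu> \<in> F t \<Longrightarrow> \<mu> \<noteq> {}"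
  using partition_atoms partition_onD3 by blast

lemma atom_subset: "t \<le> T \<Longrightarrow> \<mu> \<in> F t \<Longrightarrow> \<mu> \<subseteq> Om"
  using partition_atoms partition_onD1 by blast

lemma atom_unique:
  "t \<le> T \<Longrightarrow> \<mu> \<in> F t \<Longrightarrow> \<mu>' \<in> F t \<Longrightarrow> w \<in> \<mu> \<Longrightarrow> w \<in> \<mu>' \<Longrightarrow> \<mu> = \<mu>'"
  using partition_atoms partition_onD2 by (metis disjointD disjoint_iff)

lemma atom_cover: "t \<le> T \<Longrightarrow> w \<in> Om \<Longrightarrow> \<exists>\<mu>\<in>F t. w \<in> \<mu>"
  using partition_atoms partition_onD1 by blast

lemma finite_atoms: "t \<le> T \<Longrightarrow> finite (F t)"
  using atom_subset finite_Om by (meson Pow_iff finite_Pow_iff finite_subset subsetI)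

lemma atom_refines: "t \<le> s \<Longrightarrow> s \<le> T \<Longrightarrow> a \<in> F s \<Longrightarrow> \<exists>\<mu>\<in>F t. a \<subseteq> \<mu>"
proof (induction s arbitrary: a rule: dec_induct)
  case (step n)
  then obtain b where "b \<in> F n" "a \<subseteq> b" using atom_refines_succ[of n a] by auto
  then show ?case using step.IH step.prems by (meson Suc_leD order_trans)
qed blast

lemma atom_subset_or_disjoint:
  assumes "t \<le> s" "s \<le> T" "\<mu> \<in> F t" "a \<in> F s"
  shows "a \<subseteq> \<mu> \<or> a \<inter> \<mu> = {}"
proof -
  obtain \<mu>' where "\<mu>' \<in> F t" "a \<subseteq> \<mu>'" using atom_refines[OF assms(1,2,4)] by blast
  moreover have "\<mu>' = \<mu> \<or> \<mu>' \<inter> \<mu> = {}"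
    using atom_unique[of t \<mu>' \<mu>] assms \<open>\<mu>' \<in> F t\<close> by (meson disjoint_iff le_trans)
  ultimately show ?thesis by blast
qed

lemma adapted_mono:
  assumes "t \<le> s" "s \<le> T" "adapted F t X" shows "adapted F s X"
  unfolding adapted_def
proof (intro ballI)
  fix a w w' assume a: "a \<in> F s" "w \<in> a" "w' \<in> a"
  then obtain \<mu> where "\<mu> \<in> F t" "a \<subseteq> \<mu>" using atom_refines[OF assms(1,2)] by blast
  then show "X w = X w'" using adaptedD[OF assms(3)] a by blast
qed

lemma adapted_restrict:
  assumes "t \<le> s" "s \<le> T" "\<mu> \<in> F t" "adapted F s X"
  shows "adapted F s (\<lambda>w. if w \<in> \<mu> then X w else c)"
  unfolding adapted_def
proof (intro ballI)
  fix a w w' assume a: "a \<in> F s" "w \<in> a" "w' \<in> a"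
  have "X w = X w'" using adaptedD[OF assms(4) a] .
  moreover have "a \<subseteq> \<mu> \<or> a \<inter> \<mu> = {}" using atom_subset_or_disjoint[OF assms(1-3) a(1)] .
  ultimately show "(if w \<in> \<mu> then X w else c) = (if w' \<in> \<mu> then X w' else c)"
    using a by (metis disjoint_iff subsetD)
qed

lemma Kcone_node:
  assumes "t \<le> T" "\<mu> \<in> F t" "w \<in> \<mu>" "w' \<in> \<mu>" shows "Kcone rate t w = Kcone rate t w'"
proof -
  have "adapted F t (rate t)" using rates assms(1) unfolding exchange_rates_def by blast
  then have "rate t w = rate t w'" using assms(2-4) by (rule adaptedD)
  then show ?thesis unfolding Kcone_def by simp
qed

definition atom_of :: "nat \<Rightarrow> 'w \<Rightarrow> 'w set" where
  "atom_of t w = (THE \<mu>. \<mu> \<in> F t \<and> w \<in> \<mu>)"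

lemma atom_of_eq: "t \<le> T \<Longrightarrow> \<mu> \<in> F t \<Longrightarrow> w \<in> \<mu> \<Longrightarrow> atom_of t w = \<mu>"
  using atom_unique[of t _ \<mu> w] unfolding atom_of_def by (intro the_equality) blast+

lemma atom_of_succ:
  assumes "t < T" "\<mu> \<in> F t" "w \<in> \<mu>"
  shows "atom_of (Suc t) w \<in> succ F t \<mu>" "w \<in> atom_of (Suc t) w"
proof -
  obtain \<nu> where \<nu>: "\<nu> \<in> F (Suc t)" "w \<in> \<nu>"
    using atom_cover[of "Suc t" w] atom_subset[of t \<mu>] assms by auto
  then obtain \<mu>' where "\<mu>' \<in> F t" "\<nu> \<subseteq> \<mu>'" using atom_refines_succ assms(1) by blast
  then have "\<nu> \<in> succ F t \<mu>"
    using atom_unique[of t \<mu>' \<mu> w] assms \<nu> unfolding succ_def by auto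
  then show "atom_of (Suc t) w \<in> succ F t \<mu>" "w \<in> atom_of (Suc t) w"
    using atom_of_eq[of "Suc t" \<nu> w] assms(1) \<nu> by auto
qed

lemma succ_nonempty: "t < T \<Longrightarrow> \<mu> \<in> F t \<Longrightarrow> succ F t \<mu> \<noteq> {}"
  using atom_of_succ atom_nonempty[of t \<mu>] by fastforce

lemma finite_succ: "t < T \<Longrightarrow> finite (succ F t \<mu>)"
  unfolding succ_def using finite_atoms[of "Suc t"] by auto

lemma succ_atom: "\<nu> \<in> succ F t \<mu> \<Longrightarrow> \<nu> \<in> F (Suc t)"
  unfolding succ_def by blast

definition paste :: "nat \<Rightarrow> 'w set \<Rightarrow> ('w set \<Rightarrow> 'w \<Rightarrow> 'a::zero) \<Rightarrow> 'w \<Rightarrow> 'a" where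
  "paste t \<mu> X w = (if w \<in> \<mu> then X (atom_of (Suc t) w) w else 0)"

lemma adapted_paste:
  assumes "t < T" "\<mu> \<in> F t" "Suc t \<le> s" "s \<le> T" "\<And>\<nu>. \<nu> \<in> succ F t \<mu> \<Longrightarrow> adapted F s (X \<nu>)"
  shows "adapted F s (paste t \<mu> X)"
  unfolding adapted_def
proof (intro ballI)
  fix a w w' assume a: "a \<in> F s" "w \<in> a" "w' \<in> a"
  show "paste t \<mu> X w = paste t \<mu> X w'"
  proof (cases "a \<subseteq> \<mu>")
    case True
    obtain \<nu> where \<nu>: "\<nu> \<in> F (Suc t)" "a \<subseteq> \<nu>" using atom_refines[OF assms(3,4) a(1)] by blast
    then have eq: "atom_of (Suc t) w = \<nu>" "atom_of (Suc t) w' = \<nu>"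
      using atom_of_eq[of "Suc t" \<nu>] assms(1) a by auto
    have "atom_of (Suc t) w \<in> succ F t \<mu>"
      using True a by (intro atom_of_succ(1)[OF assms(1,2)]) blast
    then have "\<nu> \<in> succ F t \<mu>" using eq by simp
    then show ?thesis using True a adaptedD[OF assms(5) a] eq unfolding paste_def by auto
  next
    case False
    then show ?thesis
      using atom_subset_or_disjoint[of t s \<mu> a] assms a unfolding paste_def by auto
  qed
qed

lemma paste_cases:
  assumes "t < T" "\<mu> \<in> F t"
  obtains "w \<notin> \<mu>"
  | \<nu> where "\<nu> \<in> succ F t \<mu>" "w \<in> \<nu>" "w \<in> \<mu>" "atom_of (Suc t) w = \<nu>"
  using atom_of_succ[OF assms] by blast


abbreviation Q :: "nat \<Rightarrow> 'w set \<Rightarrow> (real^'d) set" where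
  "Q t \<mu> \<equiv> Qnode Om F T rate t \<mu>"

text \<open>The strategy \<open>y\<close> (with \<open>y s\<close> chosen at time \<open>s - 1\<close>) turns the portfolio \<open>z\<close> held at
  time \<open>t\<close> into the zero portfolio at \<open>T + 1\<close> by solvent exchanges; these are the strategies
  in the definition of the deferred solvency cone.\<close>

definition liquidates :: "nat \<Rightarrow> ('w \<Rightarrow> real^'d) \<Rightarrow> (nat \<Rightarrow> 'w \<Rightarrow> real^'d) \<Rightarrow> bool" where
  "liquidates t z y \<longleftrightarrow> (\<forall>s\<in>{t+1..T+1}. adapted F (s - 1) (y s)) \<and> (\<forall>w\<in>Om. y (T+1) w = 0)
      \<and> (\<forall>w\<in>Om. z w - y (t+1) w \<in> Kcone rate t w)
      \<and> (\<forall>s\<in>{t+1..T}. \<forall>w\<in>Om. y s w - y (s+1) w \<in> Kcone rate s w)"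

lemma liquidatesD:
  assumes "liquidates t z y"
  shows "\<And>s. t + 1 \<le> s \<Longrightarrow> s \<le> T + 1 \<Longrightarrow> adapted F (s - 1) (y s)"
    and "\<And>w. w \<in> Om \<Longrightarrow> y (T + 1) w = 0"
    and "\<And>w. w \<in> Om \<Longrightarrow> z w - y (t + 1) w \<in> Kcone rate t w"
    and "\<And>s w. t + 1 \<le> s \<Longrightarrow> s \<le> T \<Longrightarrow> w \<in> Om \<Longrightarrow> y s w - y (s + 1) w \<in> Kcone rate s w"
  using assms unfolding liquidates_def by auto

lemma QI: "liquidates t z y \<Longrightarrow> adapted F t z \<Longrightarrow> \<forall>w\<in>\<mu>. z w = v \<Longrightarrow> v \<in> Q t \<mu>"
  unfolding Qnode_def Qset_def liquidates_def by blast

lemma QE: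
  assumes "v \<in> Q t \<mu>"
  obtains z y where "liquidates t z y" "adapted F t z" "\<forall>w\<in>\<mu>. z w = v"
  using assms unfolding Qnode_def Qset_def liquidates_def by blast

lemma liquidates_zero: "(\<And>w. w \<in> Om \<Longrightarrow> z w \<in> Kcone rate t w) \<Longrightarrow> liquidates t z (\<lambda>s w. 0)"
  unfolding liquidates_def by (simp add: adapted_const zero_in_Kcone)

lemma liquidates_tail: "liquidates t z y \<Longrightarrow> t < T \<Longrightarrow> liquidates (Suc t) (y (t+1)) y"
  unfolding liquidates_def by auto

lemma liquidates_step:
  assumes "liquidates (Suc t) z' y" "t < T" "adapted F t z'"
    "\<And>w. w \<in> Om \<Longrightarrow> z w - z' w \<in> Kcone rate t w"
  shows "liquidates t z (y(t+1 := z'))"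
  using assms unfolding liquidates_def
  by (auto simp: le_Suc_eq intro: adapted_mono)

lemma liquidates_paste:
  assumes "t < T" "\<mu> \<in> F t" "\<And>\<nu>. \<nu> \<in> succ F t \<mu> \<Longrightarrow> liquidates (Suc t) (z \<nu>) (y \<nu>)"
  shows "liquidates (Suc t) (paste t \<mu> z) (\<lambda>s. paste t \<mu> (\<lambda>\<nu>. y \<nu> s))"
  unfolding liquidates_def
proof (intro conjI ballI)
  fix s assume "s \<in> {Suc t + 1..T + 1}"
  then show "adapted F (s - 1) (paste t \<mu> (\<lambda>\<nu>. y \<nu> s))"
    using assms unfolding liquidates_def by (intro adapted_paste) auto
next
  fix w assume w: "w \<in> Om"
  show "paste t \<mu> (\<lambda>\<nu>. y \<nu> (T + 1)) w = 0"
  proof (cases rule: paste_cases[OF assms(1,2), of w])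
    case (2 \<nu>)
    then show ?thesis using assms(3)[OF 2(1)] w unfolding liquidates_def paste_def by simp
  qed (simp add: paste_def)
  show "paste t \<mu> z w - paste t \<mu> (\<lambda>\<nu>. y \<nu> (Suc t + 1)) w \<in> Kcone rate (Suc t) w"
  proof (cases rule: paste_cases[OF assms(1,2), of w])
    case (2 \<nu>)
    then show ?thesis using assms(3)[OF 2(1)] w unfolding liquidates_def paste_def by simp
  qed (simp add: paste_def zero_in_Kcone)
next
  fix s w assume s: "s \<in> {Suc t + 1..T}" and w: "w \<in> Om"
  show "paste t \<mu> (\<lambda>\<nu>. y \<nu> s) w - paste t \<mu> (\<lambda>\<nu>. y \<nu> (s + 1)) w \<in> Kcone rate s w"
  proof (cases rule: paste_cases[OF assms(1,2), of w])
    case (2 \<nu>)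
    then show ?thesis using assms(3)[OF 2(1)] s w unfolding liquidates_def paste_def by simp
  qed (simp add: paste_def zero_in_Kcone)
qed

lemma Kcone_subset_Q:
  assumes "t \<le> T" "\<mu> \<in> F t" "w0 \<in> \<mu>"
  shows "Kcone rate t w0 \<subseteq> Q t \<mu>"
proof
  fix v assume v: "v \<in> Kcone rate t w0"
  define z where "z w = (if w \<in> \<mu> then v else 0)" for w
  have "liquidates t z (\<lambda>s w. 0)"
    using v Kcone_node[OF assms(1,2) _ assms(3)] by (intro liquidates_zero) (auto simp: z_def zero_in_Kcone)
  moreover have "adapted F t z"
    unfolding z_def by (rule adapted_restrict[OF order_refl assms(1,2) adapted_const])
  ultimately show "v \<in> Q t \<mu>" by (rule QI) (simp add: z_def)
qed

lemma Q_terminal: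
  assumes "\<mu> \<in> F T" "w0 \<in> \<mu>"
  shows "Q T \<mu> = Kcone rate T w0"
proof
  show "Q T \<mu> \<subseteq> Kcone rate T w0"
  proof
    fix v assume "v \<in> Q T \<mu>"
    then obtain z y where "liquidates T z y" "adapted F T z" "\<forall>w\<in>\<mu>. z w = v" by (rule QE)
    moreover have "w0 \<in> Om" using atom_subset[OF order_refl assms(1)] assms(2) by blast
    ultimately show "v \<in> Kcone rate T w0" using assms(2) unfolding liquidates_def by force
  qed
qed (rule Kcone_subset_Q[OF order_refl assms])

lemma Q_decompose:
  assumes "t < T" "\<mu> \<in> F t" "w0 \<in> \<mu>" "v \<in> Q t \<mu>"
  obtains k c where "v = k + c" "k \<in> Kcone rate t w0" "\<And>\<nu>. \<nu> \<in> succ F t \<mu> \<Longrightarrow> c \<in> Q (Suc t) \<nu>"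
proof -
  obtain z y where zy: "liquidates t z y" "adapted F t z" "\<forall>w\<in>\<mu>. z w = v"
    using assms(4) by (rule QE)
  have "\<forall>s\<in>{t+1..T+1}. adapted F (s - 1) (y s)" using zy(1) unfolding liquidates_def by blast
  then have ad: "adapted F t (y (t+1))" using assms(1) by (auto dest: bspec[where x = "t+1"])
  have c: "y (t+1) w = y (t+1) w0" if "w \<in> \<mu>" for w by (rule adaptedD[OF ad assms(2) that assms(3)])
  have "w0 \<in> Om" using atom_subset[of t \<mu>] assms by auto
  then have "v - y (t+1) w0 \<in> Kcone rate t w0"
    using zy assms(3) unfolding liquidates_def by auto
  moreover have "y (t+1) w0 \<in> Q (Suc t) \<nu>" if "\<nu> \<in> succ F t \<mu>" for \<nu>
  proof (rule QI)
    show "liquidates (Suc t) (y (t+1)) y" using liquidates_tail[OF zy(1) assms(1)] .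
    show "adapted F (Suc t) (y (t+1))" using adapted_mono[OF _ _ ad] assms(1) by simp
    show "\<forall>w\<in>\<nu>. y (t+1) w = y (t+1) w0" using c that unfolding succ_def by blast
  qed
  ultimately show thesis using that[of "v - y (t+1) w0" "y (t+1) w0"] by simp
qed

text \<open>Conversely, strategies liquidating \<open>c\<close> from each successor node are pasted together and
  preceded by the exchange \<open>k\<close> at time \<open>t\<close>.\<close>

lemma Q_compose:
  assumes "t < T" "\<mu> \<in> F t" "w0 \<in> \<mu>" "k \<in> Kcone rate t w0"
    and c: "\<And>\<nu>. \<nu> \<in> succ F t \<mu> \<Longrightarrow> c \<in> Q (Suc t) \<nu>"
  shows "k + c \<in> Q t \<mu>"
proof -
  have "\<forall>\<nu>\<in>succ F t \<mu>. \<exists>z y. liquidates (Suc t) z y \<and> (\<forall>w\<in>\<nu>. z w = c)"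
    using c by (meson QE)
  then obtain z y where zy: "\<And>\<nu>. \<nu> \<in> succ F t \<mu> \<Longrightarrow>
      liquidates (Suc t) (z \<nu>) (y \<nu>) \<and> (\<forall>w\<in>\<nu>. z \<nu> w = c)"
    by metis
  define c' where "c' w = (if w \<in> \<mu> then c else 0)" for w
  have "paste t \<mu> z = c'"
  proof
    fix w show "paste t \<mu> z w = c' w"
      by (cases rule: paste_cases[OF assms(1,2), of w]) (use zy in \<open>auto simp: paste_def c'_def\<close>)
  qed
  then have "liquidates (Suc t) c' (\<lambda>s. paste t \<mu> (\<lambda>\<nu>. y \<nu> s))"
    using liquidates_paste[OF assms(1,2), of z y] zy by simp
  moreover have "adapted F t c'"
    unfolding c'_def using assms(1) by (intro adapted_restrict[OF order_refl _ assms(2) adapted_const]) simp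
  moreover define z' where "z' w = (if w \<in> \<mu> then k + c else 0)" for w
  moreover have "z' w - c' w \<in> Kcone rate t w" if "w \<in> Om" for w
    using assms(4) Kcone_node[of t \<mu> w0 w] assms(1-3)
    by (cases "w \<in> \<mu>") (auto simp: z'_def c'_def zero_in_Kcone)
  ultimately have "liquidates t z' ((\<lambda>s. paste t \<mu> (\<lambda>\<nu>. y \<nu> s))(t+1 := c'))"
    using assms(1) by (intro liquidates_step) auto
  moreover have "adapted F t z'"
    unfolding z'_def using assms(1) by (intro adapted_restrict[OF order_refl _ assms(2) adapted_const]) simp
  ultimately show ?thesis by (rule QI) (simp add: z'_def)
qed

lemma Q_recursion:
  assumes "t < T" "\<mu> \<in> F t" "w0 \<in> \<mu>"
  shows "Q t \<mu> = Kcone rate t w0 + (\<Inter>\<nu>\<in>succ F t \<mu>. Q (Suc t) \<nu>)"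
proof
  show "Q t \<mu> \<subseteq> Kcone rate t w0 + (\<Inter>\<nu>\<in>succ F t \<mu>. Q (Suc t) \<nu>)"
    by (auto elim!: Q_decompose[OF assms])
  show "Kcone rate t w0 + (\<Inter>\<nu>\<in>succ F t \<mu>. Q (Suc t) \<nu>) \<subseteq> Q t \<mu>"
    by (auto elim!: set_plus_elim intro: Q_compose[OF assms])
qed

lemma INT_Q_succ_subset:
  assumes "t < T" "\<mu> \<in> F t"
  shows "(\<Inter>\<nu>\<in>succ F t \<mu>. Q (Suc t) \<nu>) \<subseteq> Q t \<mu>"
proof -
  obtain w0 where "w0 \<in> \<mu>" using atom_nonempty[of t \<mu>] assms by auto
  then show ?thesis using Q_compose[OF assms _ zero_in_Kcone] by fastforce
qed

lemma finitely_generated_Q: "t \<le> T \<Longrightarrow> \<mu> \<in> F t \<Longrightarrow> finitely_generated_cone (Q t \<mu>)"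
proof (induction "T - t" arbitrary: t \<mu>)
  case 0
  then have "t = T" by simp
  moreover obtain w0 where "w0 \<in> \<mu>" using atom_nonempty 0 by blast
  ultimately show ?case using Q_terminal 0 finitely_generated_Kcone by simp
next
  case (Suc n)
  then have tT: "t < T" by simp
  obtain w0 where w0: "w0 \<in> \<mu>" using atom_nonempty Suc by blast
  have "finitely_generated_cone (\<Inter>\<nu>\<in>succ F t \<mu>. Q (Suc t) \<nu>)"
    using Suc tT by (intro finitely_generated_cone_INT finite_succ) (auto dest: succ_atom)
  then show ?case
    unfolding Q_recursion[OF tT Suc.prems(2) w0]
    by (rule finitely_generated_cone_plus[OF finitely_generated_Kcone])
qed

lemma convex_cone_Q: "t \<le> T \<Longrightarrow> \<mu> \<in> F t \<Longrightarrow> convex_cone (Q t \<mu>)"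
  using finitely_generated_Q finitely_generated_imp_convex_cone by blast


text \<open>A liquidation \<open>y\<close> of \<open>-x\<close> from node \<open>\<mu>\<close>, shifted by \<open>x\<close> on \<open>\<mu>\<close> and set to zero elsewhere,
  starts from nothing and ends with the portfolio \<open>x\<close> on \<open>\<mu>\<close>.\<close>

definition shifted_strategy ::
    "nat \<Rightarrow> 'w set \<Rightarrow> real^'d \<Rightarrow> (nat \<Rightarrow> 'w \<Rightarrow> real^'d) \<Rightarrow> nat \<Rightarrow> 'w \<Rightarrow> real^'d" where
  "shifted_strategy t \<mu> x y s w = (if t + 1 \<le> s \<and> s \<le> T \<and> w \<in> \<mu> then y s w + x else 0)"

lemma adapted_shifted_strategy:
  assumes "liquidates t z y" "\<mu> \<in> F t" "1 \<le> s" "s \<le> T + 1"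
  shows "adapted F (s - 1) (shifted_strategy t \<mu> x y s)"
proof (cases "t + 1 \<le> s \<and> s \<le> T")
  case True
  then have "adapted F (s - 1) (y s)" using liquidatesD(1)[OF assms(1)] by simp
  then have "adapted F (s - 1) (\<lambda>w. y s w + x)" unfolding adapted_def by metis
  then have "adapted F (s - 1) (\<lambda>w. if w \<in> \<mu> then y s w + x else 0)"
    using True by (intro adapted_restrict[OF _ _ assms(2)]) linarith+
  then show ?thesis using True unfolding shifted_strategy_def by simp
next
  case False
  then have "shifted_strategy t \<mu> x y s = (\<lambda>w. 0)" unfolding shifted_strategy_def by (intro ext) auto
  then show ?thesis by (simp add: adapted_const)
qed

lemma shifted_strategy_step:
  assumes "liquidates t z y" "\<forall>w\<in>\<mu>. z w = - x" "s < T" "w \<in> Om"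
  shows "shifted_strategy t \<mu> x y s w - shifted_strategy t \<mu> x y (s + 1) w \<in> Kcone rate s w"
proof -
  consider "w \<notin> \<mu> \<or> s < t" | "w \<in> \<mu>" "s = t" | "w \<in> \<mu>" "t + 1 \<le> s" by linarith
  then show ?thesis
  proof cases
    case 1
    then have "\<not> (t + 1 \<le> s \<and> s \<le> T \<and> w \<in> \<mu>)" "\<not> (t + 1 \<le> s + 1 \<and> s + 1 \<le> T \<and> w \<in> \<mu>)"
      by auto
    then show ?thesis
      unfolding shifted_strategy_def by (simp only: if_not_P if_False zero_in_Kcone diff_self)
  next
    case 2
    then show ?thesis using liquidatesD(3)[OF assms(1,4)] assms(2,3)
      by (simp add: shifted_strategy_def algebra_simps)
  next
    case 3
    then show ?thesis using liquidatesD(4)[OF assms(1) _ _ assms(4)] assms(3)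
      by (simp add: shifted_strategy_def)
  qed
qed

lemma shifted_strategy_last:
  assumes "liquidates t z y" "\<forall>w\<in>\<mu>. z w = - x" "t \<le> T" "w \<in> Om"
  shows "shifted_strategy t \<mu> x y T w - (if w \<in> \<mu> then x else 0) \<in> Kcone rate T w"
proof (cases "w \<in> \<mu>")
  case True
  show ?thesis
  proof (cases "t < T")
    case True
    then show ?thesis
      using liquidatesD(2)[OF assms(1,4)] liquidatesD(4)[OF assms(1) _ order_refl assms(4)] \<open>w \<in> \<mu>\<close>
      by (simp add: shifted_strategy_def)
  next
    case False
    then show ?thesis using liquidatesD(2,3)[OF assms(1,4)] assms(2,3) \<open>w \<in> \<mu>\<close>
      by (simp add: shifted_strategy_def)
  qed
qed (simp add: shifted_strategy_def zero_in_Kcone)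

lemma neg_nonneg_notin_Q:
  assumes NA: "no_arbitrage Om F T rate" and tT: "t \<le> T" and \<mu>: "\<mu> \<in> F t"
    and x: "\<And>k. 0 \<le> x $ k" "x \<noteq> 0"
  shows "- x \<notin> Q t \<mu>"
proof
  assume "- x \<in> Q t \<mu>"
  then obtain z y where zy: "liquidates t z y" "\<forall>w\<in>\<mu>. z w = - x" by (elim QE)
  define Y where "Y = shifted_strategy t \<mu> x y"
  define X where "X w = (if w \<in> \<mu> then x else 0)" for w
  have "\<forall>s\<in>{1..T+1}. adapted F (s - 1) (Y s)"
    unfolding Y_def using adapted_shifted_strategy[OF zy(1) \<mu>] by simp
  moreover have "\<forall>s<T. \<forall>w\<in>Om. Y s w - Y (s+1) w \<in> Kcone rate s w"
    unfolding Y_def using shifted_strategy_step[OF zy] by blast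
  moreover have "\<forall>w\<in>Om. Y T w - X w \<in> Kcone rate T w"
    unfolding Y_def X_def using shifted_strategy_last[OF zy tT] by blast
  moreover obtain w1 where "w1 \<in> \<mu>" using atom_nonempty[OF tT \<mu>] by blast
  then have "w1 \<in> Om \<and> X w1 \<noteq> 0" using atom_subset[OF tT \<mu>] x(2) unfolding X_def by auto
  then have "\<exists>w\<in>Om. X w \<noteq> 0" by blast
  moreover have "adapted F T X"
    unfolding X_def by (rule adapted_restrict[OF tT order_refl \<mu> adapted_const])
  moreover have "\<forall>w\<in>Om. \<forall>k. 0 \<le> X w $ k" unfolding X_def using x(1) by simp
  moreover have "\<forall>w\<in>Om. Y 0 w = 0" "\<forall>w\<in>Om. Y (T+1) w = 0" by (simp_all add: Y_def shifted_strategy_def)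
  ultimately show False
    using NA unfolding no_arbitrage_def by (elim notE) (intro exI[of _ Y] exI[of _ X] conjI; assumption)
qed

lemma axis_in_Q:
  assumes "t \<le> T" "\<mu> \<in> F t" shows "axis k 1 \<in> Q t \<mu>"
proof -
  obtain w0 where "w0 \<in> \<mu>" using atom_nonempty assms by blast
  then show ?thesis by (rule subsetD[OF Kcone_subset_Q[OF assms] axis_in_Kcone])
qed

lemma exchange_in_Q:
  assumes "t \<le> T" "\<mu> \<in> F t"
  obtains r where "\<And>k. r k *\<^sub>R axis j 1 - axis k 1 \<in> Q t \<mu>"
proof -
  obtain w0 where w0: "w0 \<in> \<mu>" using atom_nonempty assms by blast
  show thesis
    by (rule that[of "rate t w0 j"], rule subsetD[OF Kcone_subset_Q[OF assms w0] exchange_in_Kcone])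
qed

lemma compactly_generated_dual_Q:
  assumes "no_arbitrage Om F T rate" "t \<le> T" "\<mu> \<in> F t"
  shows "compactly_generated j (dual_cone (Q t \<mu>))"
proof -
  obtain r where r: "\<And>k. r k *\<^sub>R axis j 1 - axis k 1 \<in> Q t \<mu>"
    using exchange_in_Q[OF assms(2,3)] by metis
  have "- axis j 1 \<notin> Q t \<mu>"
  proof (rule neg_nonneg_notin_Q[OF assms])
    show "0 \<le> axis j (1::real) $ k" for k by (simp add: axis_def)
  qed (simp add: axis_eq_0_iff)
  then show ?thesis
    by (rule compactly_generated_dual_cone[OF finitely_generated_Q[OF assms(2,3)] axis_in_Q[OF assms(2,3)] r])
qed

end

section \<open>The sets of the construction and their support functions\<close>

locale option_market = filtered_market Om F T rate
  for Om :: "'w set" and F :: "nat \<Rightarrow> 'w set set" and T :: nat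
    and rate :: "nat \<Rightarrow> 'w \<Rightarrow> 'd::finite \<Rightarrow> 'd \<Rightarrow> real" +
  fixes xi :: "nat \<Rightarrow> 'w \<Rightarrow> real^'d"
  assumes opt: "american_option F T xi"
begin

abbreviation U where "U t \<mu> \<equiv> Uad Om F T rate xi t \<mu>"
abbreviation V where "V t \<mu> \<equiv> Vad Om F T rate xi t \<mu>"
abbreviation W where "W t \<mu> \<equiv> Wad Om F T rate xi t \<mu>"
abbreviation Z where "Z t \<mu> \<equiv> Zad Om F T rate xi t \<mu>"

lemma Z_terminal: "Z T \<mu> = U T \<mu>"
  unfolding Zad_def by simp

lemma W_terminal: "W T \<mu> = U T \<mu>"
  unfolding Wad_def by simp

lemma V_terminal: "V T \<mu> = U T \<mu>"
  unfolding Vad_def by simp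

lemma W_eq: "t < T \<Longrightarrow> W t \<mu> = (\<Inter>\<nu>\<in>succ F t \<mu>. Z (Suc t) \<nu>)"
  unfolding Wad_def by simp

lemma V_eq: "t < T \<Longrightarrow> V t \<mu> = W t \<mu> + Q t \<mu>"
  unfolding Vad_def set_plus_def by auto

lemma Z_eq:
  assumes "t < T" shows "Z t \<mu> = U t \<mu> \<inter> V t \<mu>"
proof -
  define n where "n = T - Suc t"
  have n: "T - t = Suc n" "T - Suc n = t" "T - Suc t = n" using assms unfolding n_def by auto
  have "Z t \<mu> = Zrec Om F T rate xi (Suc n) \<mu>" unfolding Zad_def n(1) ..
  also have "\<dots> = U t \<mu> \<inter> {w + q | w q. w \<in> (\<Inter>\<nu>\<in>succ F t \<mu>. Zrec Om F T rate xi n \<nu>)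
                 \<and> q \<in> Q t \<mu>}" unfolding Zrec.simps n(2) ..
  also have "(\<Inter>\<nu>\<in>succ F t \<mu>. Zrec Om F T rate xi n \<nu>) = W t \<mu>"
    unfolding W_eq[OF assms] Zad_def n(3) ..
  finally show ?thesis unfolding Vad_def using assms by simp
qed

lemma Z_subset_U: "t \<le> T \<Longrightarrow> Z t \<mu> \<subseteq> U t \<mu>"
  using Z_eq Z_terminal by (cases "t < T") auto

text \<open>A portfolio dominating every payoff componentwise lies in every \<open>Z t \<mu>\<close>.\<close>

definition payoff_bound :: "real^'d" where
  "payoff_bound = (\<chi> k. \<Sum>s\<le>T. \<Sum>w\<in>Om. \<bar>xi s w $ k\<bar>)"

lemma payoff_bound_ge: "s \<le> T \<Longrightarrow> w \<in> Om \<Longrightarrow> 0 \<le> (payoff_bound - xi s w) $ k"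
proof -
  assume "s \<le> T" "w \<in> Om"
  then have "\<bar>xi s w $ k\<bar> \<le> (\<Sum>w\<in>Om. \<bar>xi s w $ k\<bar>)"
    by (intro member_le_sum) (auto simp: finite_Om)
  also have "\<dots> \<le> (\<Sum>s\<le>T. \<Sum>w\<in>Om. \<bar>xi s w $ k\<bar>)"
    using \<open>s \<le> T\<close> by (intro member_le_sum) (auto intro: sum_nonneg)
  finally show ?thesis unfolding payoff_bound_def by simp
qed

lemma payoff_bound_in_U:
  assumes "t \<le> T" "\<mu> \<in> F t" shows "payoff_bound \<in> U t \<mu>"
proof -
  obtain w where w: "w \<in> \<mu>" using atom_nonempty assms by blast
  then have "w \<in> Om" using atom_subset assms by blast
  then have "payoff_bound - xi t w \<in> Kcone rate t w"
    by (intro nonneg_in_Kcone payoff_bound_ge assms(1))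
  then have "payoff_bound - xi t w \<in> Q t \<mu>" by (rule subsetD[OF Kcone_subset_Q[OF assms w]])
  moreover have "atnode (xi t) \<mu> = xi t w"
    using opt assms w unfolding american_option_def by (blast intro: atnode_eq)
  ultimately show ?thesis
    unfolding Uad_def by (intro image_eqI[where x = "payoff_bound - xi t w"]) simp_all
qed

lemma payoff_bound_in_Z: "t \<le> T \<Longrightarrow> \<mu> \<in> F t \<Longrightarrow> payoff_bound \<in> Z t \<mu>"
proof (induction "T - t" arbitrary: t \<mu>)
  case 0
  then show ?case using payoff_bound_in_U Z_terminal by simp
next
  case (Suc n)
  then have tT: "t < T" by simp
  have "payoff_bound \<in> W t \<mu>"
    unfolding W_eq[OF tT] using Suc tT by (auto dest: succ_atom)
  moreover have "0 \<in> Q t \<mu>" using convex_cone_Q Suc.prems convex_cone_contains_0 by blast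
  ultimately have "payoff_bound + 0 \<in> V t \<mu>" unfolding V_eq[OF tT] by blast
  then show ?case using payoff_bound_in_U[OF Suc.prems] Z_eq[OF tT] by simp
qed

lemma payoff_bound_in_W:
  assumes "t \<le> T" "\<mu> \<in> F t" shows "payoff_bound \<in> W t \<mu>"
proof (cases "t < T")
  case True
  then show ?thesis using payoff_bound_in_Z unfolding W_eq[OF True] by (auto dest: succ_atom)
next
  case False
  then show ?thesis using payoff_bound_in_U[OF assms] assms W_terminal by simp
qed

lemma payoff_bound_in_V:
  assumes "t \<le> T" "\<mu> \<in> F t" shows "payoff_bound \<in> V t \<mu>"
proof (cases "t < T")
  case True
  then show ?thesis using payoff_bound_in_Z[OF assms] Z_eq[OF True] by blast
next
  case False
  then show ?thesis using payoff_bound_in_U[OF assms] assms V_terminal by simp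
qed


lemma homogenizes_U: "t \<le> T \<Longrightarrow> \<mu> \<in> F t \<Longrightarrow> \<exists>H. homogenizes H (U t \<mu>)"
  unfolding Uad_def by (blast intro: homogenizes_translation finitely_generated_Q)

lemma homogenizable_V_Z:
  "t \<le> T \<Longrightarrow> \<mu> \<in> F t \<Longrightarrow> (\<exists>H. homogenizes H (V t \<mu>)) \<and> (\<exists>H. homogenizes H (Z t \<mu>))"
proof (induction "T - t" arbitrary: t \<mu>)
  case 0
  then show ?case using homogenizes_U V_terminal Z_terminal by simp
next
  case (Suc n)
  then have tT: "t < T" by simp
  have "\<forall>\<nu>\<in>succ F t \<mu>. \<exists>H. homogenizes H (Z (Suc t) \<nu>)"
    using Suc tT by (auto dest: succ_atom)
  then obtain H where "\<And>\<nu>. \<nu> \<in> succ F t \<mu> \<Longrightarrow> homogenizes (H \<nu>) (Z (Suc t) \<nu>)" by metis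
  then have "homogenizes (\<Inter>\<nu>\<in>succ F t \<mu>. H \<nu>) (W t \<mu>)"
    unfolding W_eq[OF tT] using tT Suc.prems by (intro homogenizes_INT finite_succ succ_nonempty)
  then have V: "\<exists>H. homogenizes H (V t \<mu>)"
    unfolding V_eq[OF tT] using homogenizes_plus finitely_generated_Q Suc.prems by blast
  then have "\<exists>H. homogenizes H (Z t \<mu>)"
    unfolding Z_eq[OF tT] using homogenizes_Int homogenizes_U Suc.prems by blast
  with V show ?case ..
qed

lemma Z_plus_Q:
  assumes "t \<le> T" "\<mu> \<in> F t" "s \<in> Z t \<mu>" "q \<in> Q t \<mu>"
  shows "s + q \<in> Z t \<mu>"
proof -
  have add: "q' + q \<in> Q t \<mu>" if "q' \<in> Q t \<mu>" for q'
    using convex_cone_add[OF convex_cone_Q[OF assms(1,2)] that assms(4)] .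
  have U: "s + q \<in> U t \<mu>" if "s \<in> U t \<mu>" for s
    using that add unfolding Uad_def by (auto simp: add.assoc)
  show ?thesis
  proof (cases "t < T")
    case True
    have "s + q \<in> V t \<mu>" if "s \<in> V t \<mu>" for s
      using that add unfolding V_eq[OF True] by (auto elim!: set_plus_elim) (metis add.assoc set_plus_intro)
    then show ?thesis using U assms(3) unfolding Z_eq[OF True] by blast
  next
    case False
    then show ?thesis using U assms Z_terminal by simp
  qed
qed

lemma neg_support_U:
  assumes "t \<le> T" "\<mu> \<in> F t"
  shows "neg_support (U t \<mu>) y
    = (if y \<in> dual_cone (Q t \<mu>) then ereal (- (y \<bullet> atnode (xi t) \<mu>)) else \<infinity>)"
  unfolding Uad_def dual_cone_eq_cone_dual by (rule neg_support_translated_cone[OF convex_cone_Q[OF assms]])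

lemma neg_support_V:
  assumes "t \<le> T" "\<mu> \<in> F t"
  shows "neg_support (V t \<mu>) y = (if y \<in> dual_cone (Q t \<mu>) then neg_support (W t \<mu>) y else \<infinity>)"
proof (cases "t < T")
  case True
  show ?thesis
    unfolding V_eq[OF True] dual_cone_eq_cone_dual
    using payoff_bound_in_W[OF assms] by (intro neg_support_plus_cone convex_cone_Q assms) blast
next
  case False
  then show ?thesis using neg_support_U[OF assms] assms V_terminal W_terminal by simp
qed

lemma neg_support_Z_finite_iff:
  assumes "t \<le> T" "\<mu> \<in> F t"
  shows "neg_support (Z t \<mu>) y < \<infinity> \<longleftrightarrow> y \<in> dual_cone (Q t \<mu>)"
proof
  assume "neg_support (Z t \<mu>) y < \<infinity>"
  then show "y \<in> dual_cone (Q t \<mu>)"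
    using neg_support_translation_invariant[OF _ Z_plus_Q[OF assms] convex_cone_Q[OF assms]]
      payoff_bound_in_Z[OF assms] unfolding dual_cone_eq_cone_dual by fastforce
next
  assume "y \<in> dual_cone (Q t \<mu>)"
  then have "neg_support (U t \<mu>) y < \<infinity>" using neg_support_U[OF assms] by simp
  then show "neg_support (Z t \<mu>) y < \<infinity>"
    using neg_support_mono[OF Z_subset_U[OF assms(1)]] by (rule le_less_trans[rotated])
qed

lemma edom_neg_support_Z:
  "t \<le> T \<Longrightarrow> \<mu> \<in> F t \<Longrightarrow> edom (neg_support (Z t \<mu>)) = dual_cone (Q t \<mu>)"
  unfolding edom_def using neg_support_Z_finite_iff by blast

text \<open>\<open>Q t \<mu>\<close> contains \<open>\<Inter>\<nu>. Q (Suc t) \<nu>\<close>, whose dual is \<open>\<Sum>\<nu>. dual_cone (Q (Suc t) \<nu>)\<close>; so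
  every \<open>y\<close> in the dual of \<open>Q t \<mu>\<close> splits into points of the domains of the \<open>neg_support (Z (Suc t) \<nu>)\<close>.\<close>

lemma neg_support_W_finite:
  assumes tT: "t < T" and \<mu>: "\<mu> \<in> F t" and y: "y \<in> dual_cone (Q t \<mu>)"
  shows "neg_support (W t \<mu>) y < \<infinity>"
proof -
  have fgQ: "\<And>\<nu>. \<nu> \<in> succ F t \<mu> \<Longrightarrow> finitely_generated_cone (Q (Suc t) \<nu>)"
    using tT by (auto intro: finitely_generated_Q dest: succ_atom)
  have "y \<in> cone_dual (\<Inter>\<nu>\<in>succ F t \<mu>. Q (Suc t) \<nu>)"
    using y cone_dual_antimono[OF INT_Q_succ_subset[OF tT \<mu>]] by (auto simp: dual_cone_eq_cone_dual)
  also have "\<dots> = (\<Sum>\<nu>\<in>succ F t \<mu>. cone_dual (Q (Suc t) \<nu>))"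
    by (rule cone_dual_INT[OF finite_succ[OF tT] fgQ])
  finally obtain z where z: "y = (\<Sum>\<nu>\<in>succ F t \<mu>. z \<nu>)"
    "\<And>\<nu>. \<nu> \<in> succ F t \<mu> \<Longrightarrow> z \<nu> \<in> cone_dual (Q (Suc t) \<nu>)"
    unfolding set_sum_alt[OF finite_succ[OF tT]] by blast
  have "neg_support (W t \<mu>) y \<le> (\<Sum>\<nu>\<in>succ F t \<mu>. neg_support (Z (Suc t) \<nu>) (z \<nu>))"
    unfolding W_eq[OF tT] by (rule neg_support_INT_le[OF finite_succ[OF tT] z(1)[symmetric]]) blast
  also have "\<dots> < \<infinity>"
  proof -
    have "neg_support (Z (Suc t) \<nu>) (z \<nu>) \<noteq> \<infinity>" if "\<nu> \<in> succ F t \<mu>" for \<nu>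
      using neg_support_Z_finite_iff[of "Suc t" \<nu>] z(2)[OF that] succ_atom[OF that] tT
      by (simp add: dual_cone_eq_cone_dual)
    then show ?thesis using finite_succ[OF tT] by (simp add: sum_Pinfty less_top[symmetric])
  qed
  finally show ?thesis .
qed


lemma conv_fun_U_V:
  assumes "t < T" "\<mu> \<in> F t"
  shows "conv_fun UNIV (\<lambda>c. if c then neg_support (U t \<mu>) else neg_support (V t \<mu>))
    = neg_support (Z t \<mu>)"
proof -
  have t: "t \<le> T" using assms(1) by simp
  obtain HU HV where "homogenizes HU (U t \<mu>)" "homogenizes HV (V t \<mu>)"
    using homogenizes_U[OF t assms(2)] homogenizable_V_Z[OF t assms(2)] by blast
  then show ?thesis
    unfolding Z_eq[OF assms(1)]
    using payoff_bound_in_Z[OF t assms(2)] Z_eq[OF assms(1)] by (intro conv_fun_neg_support_Int) auto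
qed

lemma conv_fun_Z_succ:
  assumes "t < T" "\<mu> \<in> F t"
  shows "conv_fun (succ F t \<mu>) (\<lambda>\<nu>. neg_support (Z (Suc t) \<nu>)) = neg_support (W t \<mu>)"
proof -
  have "\<forall>\<nu>\<in>succ F t \<mu>. \<exists>H. homogenizes H (Z (Suc t) \<nu>)"
    using assms homogenizable_V_Z by (auto dest: succ_atom)
  then obtain H where "\<And>\<nu>. \<nu> \<in> succ F t \<mu> \<Longrightarrow> homogenizes (H \<nu>) (Z (Suc t) \<nu>)" by metis
  then show ?thesis
    unfolding W_eq[OF assms(1)]
    using payoff_bound_in_W[of t \<mu>] assms W_eq[OF assms(1)]
    by (intro conv_fun_neg_support_INT finite_succ succ_nonempty) auto
qed


lemma Z_decomposition:
  assumes NA: "no_arbitrage Om F T rate" and tT: "t < T" and \<mu>: "\<mu> \<in> F t"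
    and y: "y \<in> sigma_j j (dual_cone (Q t \<mu>))"
  obtains lam x s where "lam \<in> {0..1}" "x \<in> sigma_j j (edom (neg_support (V t \<mu>)))"
    "s \<in> sigma_j j (dual_cone (Q t \<mu>))"
    "neg_support (Z t \<mu>) y
      = ereal lam * neg_support (U t \<mu>) s + ereal (1 - lam) * neg_support (V t \<mu>) x"
    "y = lam *\<^sub>R s + (1 - lam) *\<^sub>R x"
proof -
  have t: "t \<le> T" using tT by simp
  have cg: "compactly_generated j (dual_cone (Q t \<mu>))" by (rule compactly_generated_dual_Q[OF NA t \<mu>])
  have yQ: "y \<in> dual_cone (Q t \<mu>)" "y $ j = 1" using y unfolding sigma_j_def by auto
  obtain HU HV where "homogenizes HU (U t \<mu>)" "homogenizes HV (V t \<mu>)"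
    using homogenizes_U[OF t \<mu>] homogenizable_V_Z[OF t \<mu>] by blast
  moreover have "U t \<mu> \<inter> V t \<mu> \<noteq> {}" using payoff_bound_in_Z[OF t \<mu>] Z_eq[OF tT] by auto
  moreover have "neg_support (U t \<mu> \<inter> V t \<mu>) y < \<infinity>"
    using neg_support_Z_finite_iff[OF t \<mu>] yQ(1) Z_eq[OF tT] by simp
  ultimately obtain a b where ab: "a + b = y" "neg_support (U t \<mu>) a < \<infinity>"
      "neg_support (V t \<mu>) b < \<infinity>" "neg_support (Z t \<mu>) y = neg_support (U t \<mu>) a + neg_support (V t \<mu>) b"
    unfolding Z_eq[OF tT] by (rule neg_support_Int_exact)
  have "a \<in> dual_cone (Q t \<mu>)" using ab(2) neg_support_U[OF t \<mu>, of a] by (auto split: if_splits)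
  then obtain s where s: "s \<in> sigma_j j (dual_cone (Q t \<mu>))" "a = (a $ j) *\<^sub>R s" "0 \<le> a $ j"
    by (rule compactly_generated_decompose[OF cg])
  have "b \<in> dual_cone (Q t \<mu>)" using ab(3) neg_support_V[OF t \<mu>, of b] by (auto split: if_splits)
  then obtain x where x: "x \<in> sigma_j j (dual_cone (Q t \<mu>))" "b = (b $ j) *\<^sub>R x" "0 \<le> b $ j"
    by (rule compactly_generated_decompose[OF cg])
  have "x \<in> dual_cone (Q t \<mu>)" "x $ j = 1" using x(1) unfolding sigma_j_def by auto
  then have x_dom: "x \<in> sigma_j j (edom (neg_support (V t \<mu>)))"
    using neg_support_V[OF t \<mu>, of x] neg_support_W_finite[OF tT \<mu>] unfolding sigma_j_def edom_def by simp
  have Ua: "neg_support (U t \<mu>) a = ereal (a $ j) * neg_support (U t \<mu>) s"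
    using arg_cong[OF s(2), of "neg_support (U t \<mu>)"] neg_support_scaleR payoff_bound_in_U[OF t \<mu>] s(3)
    by (metis empty_iff)
  have Vb: "neg_support (V t \<mu>) b = ereal (b $ j) * neg_support (V t \<mu>) x"
    using arg_cong[OF x(2), of "neg_support (V t \<mu>)"] neg_support_scaleR payoff_bound_in_V[OF t \<mu>] x(3)
    by (metis empty_iff)
  have bj: "b $ j = 1 - a $ j" using arg_cong[OF ab(1), of "\<lambda>v. v $ j"] yQ(2) by simp
  show thesis
  proof (rule that[of "a $ j" x s])
    show "a $ j \<in> {0..1}" using s(3) x(3) bj by simp
    show "neg_support (Z t \<mu>) y
      = ereal (a $ j) * neg_support (U t \<mu>) s + ereal (1 - a $ j) * neg_support (V t \<mu>) x"
      using ab(4) Ua Vb bj by simp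
    show "y = (a $ j) *\<^sub>R s + (1 - a $ j) *\<^sub>R x" using ab(1) s(2) x(2) bj by metis
  qed (fact x_dom s(1))+
qed


lemma W_decomposition:
  assumes NA: "no_arbitrage Om F T rate" and tT: "t < T" and \<mu>: "\<mu> \<in> F t"
    and x: "x \<in> sigma_j j (edom (neg_support (W t \<mu>)))"
  obtains q yv where
    "\<And>\<nu>. \<nu> \<in> succ F t \<mu> \<Longrightarrow> q \<nu> \<in> {0..1} \<and> yv \<nu> \<in> sigma_j j (dual_cone (Q (Suc t) \<nu>))"
    "neg_support (W t \<mu>) x = (\<Sum>\<nu>\<in>succ F t \<mu>. ereal (q \<nu>) * neg_support (Z (Suc t) \<nu>) (yv \<nu>))"
    "x = (\<Sum>\<nu>\<in>succ F t \<mu>. q \<nu> *\<^sub>R yv \<nu>)" "(\<Sum>\<nu>\<in>succ F t \<mu>. q \<nu>) = 1"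
proof -
  let ?I = "succ F t \<mu>"
  have t: "t \<le> T" and fin: "finite ?I" using tT finite_succ by auto
  have \<nu>: "Suc t \<le> T" "\<nu> \<in> F (Suc t)" if "\<nu> \<in> ?I" for \<nu> using tT succ_atom[OF that] by auto
  have xW: "neg_support (W t \<mu>) x < \<infinity>" "x $ j = 1" using x unfolding sigma_j_def edom_def by auto
  have "\<forall>\<nu>\<in>?I. \<exists>H. homogenizes H (Z (Suc t) \<nu>)" using homogenizable_V_Z \<nu> by blast
  then obtain H where "\<And>\<nu>. \<nu> \<in> ?I \<Longrightarrow> homogenizes (H \<nu>) (Z (Suc t) \<nu>)" by metis
  moreover have "(\<Inter>\<nu>\<in>?I. Z (Suc t) \<nu>) \<noteq> {}" using payoff_bound_in_W[OF t \<mu>] W_eq[OF tT] by auto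
  ultimately obtain z where z: "(\<Sum>\<nu>\<in>?I. z \<nu>) = x" "\<And>\<nu>. \<nu> \<in> ?I \<Longrightarrow> neg_support (Z (Suc t) \<nu>) (z \<nu>) < \<infinity>"
    "neg_support (W t \<mu>) x = (\<Sum>\<nu>\<in>?I. neg_support (Z (Suc t) \<nu>) (z \<nu>))"
    using neg_support_INT_exact[OF fin succ_nonempty[OF tT \<mu>]] xW(1) unfolding W_eq[OF tT] by blast
  have "\<forall>\<nu>\<in>?I. \<exists>s. s \<in> sigma_j j (dual_cone (Q (Suc t) \<nu>)) \<and> z \<nu> = (z \<nu> $ j) *\<^sub>R s \<and> 0 \<le> z \<nu> $ j"
  proof
    fix \<nu> assume "\<nu> \<in> ?I"
    then have "z \<nu> \<in> dual_cone (Q (Suc t) \<nu>)" using z(2) neg_support_Z_finite_iff \<nu> by blast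
    then show "\<exists>s. s \<in> sigma_j j (dual_cone (Q (Suc t) \<nu>)) \<and> z \<nu> = (z \<nu> $ j) *\<^sub>R s \<and> 0 \<le> z \<nu> $ j"
      using compactly_generated_decompose[OF compactly_generated_dual_Q[OF NA \<nu>[OF \<open>\<nu> \<in> ?I\<close>]]] by metis
  qed
  then obtain yv where yv: "\<And>\<nu>. \<nu> \<in> ?I \<Longrightarrow> yv \<nu> \<in> sigma_j j (dual_cone (Q (Suc t) \<nu>))"
    "\<And>\<nu>. \<nu> \<in> ?I \<Longrightarrow> z \<nu> = (z \<nu> $ j) *\<^sub>R yv \<nu>" "\<And>\<nu>. \<nu> \<in> ?I \<Longrightarrow> 0 \<le> z \<nu> $ j"
    by metis
  define q where "q \<nu> = z \<nu> $ j" for \<nu>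
  have sum_q: "(\<Sum>\<nu>\<in>?I. q \<nu>) = 1" unfolding q_def using z(1) xW(2) by (metis sum_component)
  have q01: "q \<nu> \<in> {0..1}" if "\<nu> \<in> ?I" for \<nu>
    using member_le_sum[OF that, of q] yv(3) sum_q fin that unfolding q_def by simp
  have Zq: "neg_support (Z (Suc t) \<nu>) (z \<nu>) = ereal (q \<nu>) * neg_support (Z (Suc t) \<nu>) (yv \<nu>)"
    if "\<nu> \<in> ?I" for \<nu>
    using arg_cong[OF yv(2)[OF that], of "neg_support (Z (Suc t) \<nu>)"] neg_support_scaleR
      payoff_bound_in_Z[OF \<nu>[OF that]] yv(3)[OF that] unfolding q_def by (metis empty_iff)
  have zq: "z \<nu> = q \<nu> *\<^sub>R yv \<nu>" if "\<nu> \<in> ?I" for \<nu> using yv(2)[OF that] unfolding q_def .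
  show thesis
  proof (rule that[of q yv])
    show "neg_support (W t \<mu>) x = (\<Sum>\<nu>\<in>?I. ereal (q \<nu>) * neg_support (Z (Suc t) \<nu>) (yv \<nu>))"
      unfolding z(3) using Zq by (rule sum.cong[OF refl])
    show "x = (\<Sum>\<nu>\<in>?I. q \<nu> *\<^sub>R yv \<nu>)"
      unfolding z(1)[symmetric] using zq by (rule sum.cong[OF refl])
  qed (use q01 yv(1) sum_q in auto)
qed

end

theorem propositionA3:
  fixes Om :: "'w set" and F :: "nat \<Rightarrow> 'w set set" and T :: nat
    and rate :: "nat \<Rightarrow> 'w \<Rightarrow> 'd::finite \<Rightarrow> 'd \<Rightarrow> real"
    and xi :: "nat \<Rightarrow> 'w \<Rightarrow> real^'d" and j :: 'd
  assumes filt: "filtration Om F T"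
    and rates: "exchange_rates Om F T rate"
    and NA: "no_arbitrage Om F T rate"
    and opt: "american_option F T xi"
  shows
    "(\<forall>t\<le>T. \<forall>\<mu>\<in>F t. compactly_generated j (dual_cone (Qnode Om F T rate t \<mu>)))
   \<and> (\<forall>t\<le>T. \<forall>\<mu>\<in>F t. \<forall>y.
        Ufun Om F T rate xi t \<mu> y =
          (if y \<in> dual_cone (Qnode Om F T rate t \<mu>) then ereal (- (y \<bullet> atnode (xi t) \<mu>)) else \<infinity>)
      \<and> Vfun Om F T rate xi t \<mu> y =
          (if y \<in> dual_cone (Qnode Om F T rate t \<mu>) then Wfun Om F T rate xi t \<mu> y else \<infinity>))
   \<and> (\<forall>t\<le>T. \<forall>\<mu>\<in>F t. edom (Zfun Om F T rate xi t \<mu>) = dual_cone (Qnode Om F T rate t \<mu>))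
   \<and> (\<forall>t<T. \<forall>\<mu>\<in>F t.
        Zfun Om F T rate xi t \<mu> =
          conv_fun (UNIV :: bool set) (\<lambda>b. if b then Ufun Om F T rate xi t \<mu> else Vfun Om F T rate xi t \<mu>)
      \<and> (\<forall>y\<in>sigma_j j (dual_cone (Qnode Om F T rate t \<mu>)).
           \<exists>lam\<in>{0..1::real}. \<exists>x\<in>sigma_j j (edom (Vfun Om F T rate xi t \<mu>)).
           \<exists>s\<in>sigma_j j (dual_cone (Qnode Om F T rate t \<mu>)).
             Zfun Om F T rate xi t \<mu> y = ereal lam * Ufun Om F T rate xi t \<mu> s
                                     + ereal (1 - lam) * Vfun Om F T rate xi t \<mu> x
           \<and> y = lam *\<^sub>R s + (1 - lam) *\<^sub>R x))
   \<and> (\<forall>t<T. \<forall>\<mu>\<in>F t.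
        Wfun Om F T rate xi t \<mu> = conv_fun (succ F t \<mu>) (\<lambda>\<nu>. Zfun Om F T rate xi (Suc t) \<nu>)
      \<and> (\<forall>x\<in>sigma_j j (edom (Wfun Om F T rate xi t \<mu>)).
           \<exists>(q :: 'w set \<Rightarrow> real) (yv :: 'w set \<Rightarrow> real^'d).
             (\<forall>\<nu>\<in>succ F t \<mu>. q \<nu> \<in> {0..1}
                 \<and> yv \<nu> \<in> sigma_j j (dual_cone (Qnode Om F T rate (Suc t) \<nu>)))
           \<and> Wfun Om F T rate xi t \<mu> x = (\<Sum>\<nu>\<in>succ F t \<mu>. ereal (q \<nu>) * Zfun Om F T rate xi (Suc t) \<nu> (yv \<nu>))
           \<and> x = (\<Sum>\<nu>\<in>succ F t \<mu>. q \<nu> *\<^sub>R yv \<nu>)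
           \<and> (\<Sum>\<nu>\<in>succ F t \<mu>. q \<nu>) = 1))"
proof -
  interpret option_market Om F T rate xi
    using filt rates opt by unfold_locales
  show ?thesis
    unfolding Ufun_def Vfun_def Wfun_def Zfun_def support_fun_uminus
  proof (intro conjI allI impI ballI)
    fix t \<mu> assume "t \<le> T" "\<mu> \<in> F t"
    then show "compactly_generated j (dual_cone (Q t \<mu>))"
      and "\<And>y. neg_support (U t \<mu>) y
        = (if y \<in> dual_cone (Q t \<mu>) then ereal (- (y \<bullet> atnode (xi t) \<mu>)) else \<infinity>)"
      and "\<And>y. neg_support (V t \<mu>) y = (if y \<in> dual_cone (Q t \<mu>) then neg_support (W t \<mu>) y else \<infinity>)"
      and "edom (neg_support (Z t \<mu>)) = dual_cone (Q t \<mu>)"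
      by (simp_all add: compactly_generated_dual_Q[OF NA] neg_support_U neg_support_V edom_neg_support_Z)
  next
    fix t \<mu> assume "t < T" "\<mu> \<in> F t"
    then show "neg_support (Z t \<mu>) = conv_fun UNIV (\<lambda>b. if b then neg_support (U t \<mu>) else neg_support (V t \<mu>))"
      and "neg_support (W t \<mu>) = conv_fun (succ F t \<mu>) (\<lambda>\<nu>. neg_support (Z (Suc t) \<nu>))"
      by (simp_all add: conv_fun_U_V conv_fun_Z_succ)
    show "\<exists>lam\<in>{0..1}. \<exists>x\<in>sigma_j j (edom (neg_support (V t \<mu>))). \<exists>s\<in>sigma_j j (dual_cone (Q t \<mu>)).
        neg_support (Z t \<mu>) y = ereal lam * neg_support (U t \<mu>) s + ereal (1 - lam) * neg_support (V t \<mu>) x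
        \<and> y = lam *\<^sub>R s + (1 - lam) *\<^sub>R x" if "y \<in> sigma_j j (dual_cone (Q t \<mu>))" for y
      by (rule Z_decomposition[OF NA \<open>t < T\<close> \<open>\<mu> \<in> F t\<close> that]) blast
    show "\<exists>q yv. (\<forall>\<nu>\<in>succ F t \<mu>. q \<nu> \<in> {0..1} \<and> yv \<nu> \<in> sigma_j j (dual_cone (Q (Suc t) \<nu>)))
        \<and> neg_support (W t \<mu>) x = (\<Sum>\<nu>\<in>succ F t \<mu>. ereal (q \<nu>) * neg_support (Z (Suc t) \<nu>) (yv \<nu>))
        \<and> x = (\<Sum>\<nu>\<in>succ F t \<mu>. q \<nu> *\<^sub>R yv \<nu>) \<and> (\<Sum>\<nu>\<in>succ F t \<mu>. q \<nu>) = 1"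
      if "x \<in> sigma_j j (edom (neg_support (W t \<mu>)))" for x
      by (rule W_decomposition[OF NA \<open>t < T\<close> \<open>\<mu> \<in> F t\<close> that]) blast
  qed
qed

end
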